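(* Let $\nu(\mathbb{R}^d\setminus\{0\})<\infty$ and assume (B) and (C) below hold with some $E\subset\mathbb{S}^{d-1}$ and $\kappa\ge0$. (a) For every $n\in\mathbb{N}$, $\theta\in E$ and $y\in\mathbb{R}^d$, $$\lim_{s\to\infty}\frac{\nu^{n*}(s\theta-y)}{\nu(s\theta)}=e^{\kappa(\theta\cdot y)}\,n\Big(\int e^{\kappa(\theta\cdot z)}\nu(z)\,dz\Big)^{n-1}.$$ (b) If the convergence in (C) is uniform in $(\theta,y)\in E\times D$ for every compact $D\subset\mathbb{R}^d$, then for every $n$ the convergence in (a) is uniform in $(\theta,y)$ on each set $E\times B(0,\varrho)$, $\varrho>0$.
   Context: Let $d\ge1$ and $\nu$ a Lévy measure on $\mathbb{R}^d\setminus\{0\}$; $\nu^{n*}$ is the density of the $n$-fold convolution of $\nu$. $\Gamma_E=\{y\ne0:y/|y|\in E\}$. (B) $\nu(dx)=\nu(x)dx$; there are nonincreasing $f:(0,\infty)\to(0,\infty)$ and $C_0>0$ with $\nu(x)\le C_0f(|x|)$, $\liminf_{r\to0^+}\frac{\nu(\{|x|>r\})}{f(r)r^d}>0$, and $K(r):=\sup_{|x|>1}\frac{1}{f(|x|)}\int_{|x-y|>r,|y|>r}f(|x-y|)f(|y|)dy$ decreases to $0$ as $r\to\infty$. (C) $\lim_{r\to\infty}\nu(r\theta-y)/\nu(r\theta)=e^{\kappa(\theta\cdot y)}$ for all $y\in\mathbb{R}^d$, $\theta\in E$, and $\inf_{x\in\Gamma_E}\nu(x)/f(|x|)>0$. 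*)

theory Defs
  imports "HOL-Analysis.Analysis"
begin

definition conv :: "('a::euclidean_space \<Rightarrow> real) \<Rightarrow> ('a \<Rightarrow> real) \<Rightarrow> 'a \<Rightarrow> real" where
  "conv g h x = (\<integral>y. g (x - y) * h y \<partial>lborel)"

text \<open>Density of the n-fold convolution nu^{n*}, n >= 1: nconv nu 1 = nu,
  nconv nu (n+1) = nu * nconv nu n.\<close>
definition nconv :: "('a::euclidean_space \<Rightarrow> real) \<Rightarrow> nat \<Rightarrow> 'a \<Rightarrow> real" where
  "nconv nu n = ((conv nu) ^^ (n - 1)) nu"

definition GammaE :: "'a::euclidean_space set \<Rightarrow> 'a set" where
  "GammaE E = {y. y \<noteq> 0 \<and> y /\<^sub>R norm y \<in> E}"

definition Kfun :: "(real \<Rightarrow> real) \<Rightarrow> 'a::euclidean_space itself \<Rightarrow> real \<Rightarrow> ennreal" where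
  "Kfun f _ r = (SUP x\<in>{x::'a. 1 < norm x}.
     \<integral>\<^sup>+ y. indicator {y. r < norm (x - y) \<and> r < norm y} y
            * ennreal (f (norm (x - y)) * f (norm y) / f (norm x)) \<partial>lborel)"

definition condB :: "('a::euclidean_space \<Rightarrow> real) \<Rightarrow> (real \<Rightarrow> real) \<Rightarrow> bool" where
  "condB nu f \<longleftrightarrow>
     (\<forall>r>0. 0 < f r) \<and> (\<forall>r s. 0 < r \<longrightarrow> r \<le> s \<longrightarrow> f s \<le> f r) \<and>
     (\<exists>C0>0. \<forall>x. x \<noteq> 0 \<longrightarrow> nu x \<le> C0 * f (norm x)) \<and>
     0 < Liminf (at_right (0::real))
           (\<lambda>r. ereal ((\<integral>x\<in>{x::'a. r < norm x}. nu x \<partial>lborel) / (f r * r ^ DIM('a)))) \<and>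
     (\<forall>r s. 0 < r \<longrightarrow> r \<le> s \<longrightarrow> Kfun f TYPE('a) s \<le> Kfun f TYPE('a) r) \<and>
     (Kfun f TYPE('a) \<longlongrightarrow> 0) at_top"

definition condC :: "('a::euclidean_space \<Rightarrow> real) \<Rightarrow> (real \<Rightarrow> real) \<Rightarrow> 'a set \<Rightarrow> real \<Rightarrow> bool" where
  "condC nu f E \<kappa> \<longleftrightarrow>
     (\<forall>\<theta>\<in>E. \<forall>y. ((\<lambda>r. nu (r *\<^sub>R \<theta> - y) / nu (r *\<^sub>R \<theta>)) \<longlongrightarrow> exp (\<kappa> * (\<theta> \<bullet> y))) at_top) \<and>
     (\<exists>c>0. \<forall>x\<in>GammaE E. c * f (norm x) \<le> nu x)"

end

theory Submission
  imports Defs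
begin

(* Induction on n, writing nu_(n+1) = nu * nu_n for the convolution powers.  All densities g that
   occur are integrable and eventually bounded by a multiple of f(|x|), and this class is stable
   under convolution with nu: the part of the convolution integral where both arguments are large
   is controlled by K(r).

   To find the limit of (nu * g)(s theta - y) / nu(s theta), split the convolution integral into
   the part where z lies in the ball of radius r, the part where s theta - y - z does, and the rest.
   On the two balls condition (C) (or its uniform version) lets us pass to the limit under the
   integral, giving exp(kappa theta.y) times the truncated exponential moments of g and of nu, the
   latter weighted by the limit constant already known for g.  The middle region and the tails of the
   exponential moments are bounded by a multiple of K(r), uniformly in s, and K(r) -> 0.  Finally the
   exponential moment of nu_n is the n-th power of that of nu, which produces the constant
   n (int exp(kappa theta.z) nu(z) dz)^(n-1). *)

section \<open>Lebesgue integrals on Euclidean space\<close>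

lemma lborel_nn_integral_reflect:
  fixes F :: "'a::euclidean_space \<Rightarrow> ennreal"
  assumes [measurable]: "F \<in> borel_measurable borel"
  shows "(\<integral>\<^sup>+x. F (t - x) \<partial>lborel) = (\<integral>\<^sup>+x. F x \<partial>lborel)"
proof -
  have "(\<integral>\<^sup>+x. F x \<partial>lborel)
      = (\<integral>\<^sup>+x. F x \<partial>(density (distr lborel borel (\<lambda>x. t + (-1) *\<^sub>R x)) (\<lambda>_. \<bar>-1::real\<bar>^DIM('a))))"
    using lborel_affine[of "-1::real" t] by simp
  also have "\<dots> = (\<integral>\<^sup>+x. F (t - x) \<partial>lborel)"
    by (simp add: nn_integral_density nn_integral_distr)
  finally show ?thesis ..
qed

lemma lborel_integral_reflect:
  fixes F :: "'a::euclidean_space \<Rightarrow> real"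
  assumes [measurable]: "F \<in> borel_measurable borel"
  shows "(\<integral>x. F (t - x) \<partial>lborel) = (\<integral>x. F x \<partial>lborel)"
proof -
  have "(\<integral>x. F x \<partial>lborel)
      = (\<integral>x. F x \<partial>(density (distr lborel borel (\<lambda>x. t + (-1) *\<^sub>R x)) (\<lambda>_. \<bar>-1::real\<bar>^DIM('a))))"
    using lborel_affine[of "-1::real" t] by simp
  also have "\<dots> = (\<integral>x. F (t - x) \<partial>lborel)"
    by (simp add: density_1 integral_distr)
  finally show ?thesis ..
qed

lemma lborel_nn_integral_translate:
  fixes F :: "'a::euclidean_space \<Rightarrow> ennreal"
  assumes [measurable]: "F \<in> borel_measurable borel"
  shows "(\<integral>\<^sup>+x. F (x - t) \<partial>lborel) = (\<integral>\<^sup>+x. F x \<partial>lborel)"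
proof -
  have "(\<integral>\<^sup>+x. F (x - t) \<partial>lborel) = (\<integral>\<^sup>+x. F (x - t) \<partial>(distr lborel borel ((+) t)))"
    by (simp add: lborel_distr_plus)
  also have "\<dots> = (\<integral>\<^sup>+x. F x \<partial>lborel)"
    by (simp add: nn_integral_distr)
  finally show ?thesis .
qed

lemma integrable_bounded_mult:
  fixes u h :: "'a::euclidean_space \<Rightarrow> real"
  assumes "integrable lborel u" "h \<in> borel_measurable borel" "\<And>z. \<bar>h z\<bar> \<le> B"
  shows "integrable lborel (\<lambda>z. h z * u z)"
proof (rule Bochner_Integration.integrable_bound[where f="\<lambda>z. B * u z"])
  show "integrable lborel (\<lambda>z. B * u z)" using assms(1) by simp
  show "(\<lambda>z. h z * u z) \<in> borel_measurable lborel"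
    using assms(1,2) by (simp add: borel_measurable_integrable)
  show "AE z in lborel. norm (h z * u z) \<le> norm (B * u z)"
  proof (intro AE_I2)
    fix z
    have "\<bar>h z\<bar> * \<bar>u z\<bar> \<le> \<bar>B\<bar> * \<bar>u z\<bar>"
      using assms(3)[of z] by (intro mult_right_mono) auto
    then show "norm (h z * u z) \<le> norm (B * u z)" by (simp add: abs_mult)
  qed
qed

lemma integral_split_cball:
  fixes F :: "'a::euclidean_space \<Rightarrow> real"
  assumes "integrable lborel F"
  shows "(\<integral>z. F z \<partial>lborel)
    = (\<integral>z. indicator (cball 0 r) z * F z \<partial>lborel) + (\<integral>z. indicator {z. r < norm z} z * F z \<partial>lborel)"
proof -
  have "(\<integral>z. F z \<partial>lborel)
      = (\<integral>z. indicator (cball 0 r) z * F z + indicator {z. r < norm z} z * F z \<partial>lborel)"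
    by (rule Bochner_Integration.integral_cong) (auto simp: indicator_def)
  also have "\<dots> = (\<integral>z. indicator (cball 0 r) z * F z \<partial>lborel) + (\<integral>z. indicator {z. r < norm z} z * F z \<partial>lborel)"
    using integrable_mult_indicator[OF _ assms, of "cball 0 r"]
      integrable_mult_indicator[OF _ assms, of "{z. r < norm z}"] by simp
  finally show ?thesis .
qed

lemma tendsto_integral_indicator_dominated:
  fixes \<Phi> :: "real \<Rightarrow> 'a::euclidean_space \<Rightarrow> real" and \<phi> u :: "'a \<Rightarrow> real"
  assumes [measurable]: "D \<in> sets borel" and u: "integrable lborel u"
    and [measurable]: "\<And>s. \<Phi> s \<in> borel_measurable borel" "\<phi> \<in> borel_measurable borel"
    and lim: "\<And>z. z \<in> D \<Longrightarrow> ((\<lambda>s. \<Phi> s z) \<longlongrightarrow> \<phi> z) at_top"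
    and bnd: "\<forall>\<^sub>F s in at_top. \<forall>z\<in>D. \<bar>\<Phi> s z\<bar> \<le> B"
  shows "((\<lambda>s. \<integral>z. indicator D z * \<Phi> s z * u z \<partial>lborel) \<longlongrightarrow> (\<integral>z. indicator D z * \<phi> z * u z \<partial>lborel)) at_top"
proof (rule integral_dominated_convergence_at_top[where w="\<lambda>z. \<bar>B\<bar> * \<bar>u z\<bar>"])
  have [measurable]: "u \<in> borel_measurable borel" using u by (simp add: borel_measurable_integrable)
  show "(\<lambda>z. indicator D z * \<phi> z * u z) \<in> borel_measurable lborel"
    "(\<lambda>z. indicator D z * \<Phi> s z * u z) \<in> borel_measurable lborel" for s by simp_all
  show "integrable lborel (\<lambda>z. \<bar>B\<bar> * \<bar>u z\<bar>)" using u by simp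
  show "AE z in lborel. ((\<lambda>s. indicator D z * \<Phi> s z * u z) \<longlongrightarrow> indicator D z * \<phi> z * u z) at_top"
    by (intro AE_I2, case_tac "z \<in> D") (auto intro!: tendsto_intros lim)
  show "\<forall>\<^sub>F s in at_top. AE z in lborel. norm (indicator D z * \<Phi> s z * u z) \<le> \<bar>B\<bar> * \<bar>u z\<bar>"
    using bnd
  proof (rule eventually_mono, intro AE_I2)
    fix s z assume b: "\<forall>z\<in>D. \<bar>\<Phi> s z\<bar> \<le> B"
    show "norm (indicator D z * \<Phi> s z * u z) \<le> \<bar>B\<bar> * \<bar>u z\<bar>"
    proof (cases "z \<in> D")
      case True
      then have "\<bar>\<Phi> s z\<bar> \<le> \<bar>B\<bar>" using b by force
      then show ?thesis using True by (simp add: abs_mult mult_right_mono)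
    qed simp
  qed
qed

lemma integral_indicator_mult_diff_le:
  fixes \<Phi> \<phi> u :: "'a::euclidean_space \<Rightarrow> real"
  assumes [measurable]: "D \<in> sets borel" "\<Phi> \<in> borel_measurable borel" "\<phi> \<in> borel_measurable borel"
    and u: "integrable lborel u" and e: "0 \<le> e"
    and bound: "\<And>z. z \<in> D \<Longrightarrow> \<bar>\<phi> z\<bar> \<le> B" and close: "\<And>z. z \<in> D \<Longrightarrow> \<bar>\<Phi> z - \<phi> z\<bar> \<le> e"
  shows "\<bar>(\<integral>z. indicator D z * \<Phi> z * u z \<partial>lborel) - (\<integral>z. indicator D z * \<phi> z * u z \<partial>lborel)\<bar>
    \<le> e * (\<integral>z. \<bar>u z\<bar> \<partial>lborel)"
proof -
  have i1: "integrable lborel (\<lambda>z. (indicator D z * \<Phi> z) * u z)"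
  proof (rule integrable_bounded_mult[OF u, where B="\<bar>B\<bar> + e"])
    show "\<bar>indicator D z * \<Phi> z\<bar> \<le> \<bar>B\<bar> + e" for z
      using bound[of z] close[of z] e by (cases "z \<in> D") auto
  qed measurable
  have i2: "integrable lborel (\<lambda>z. (indicator D z * \<phi> z) * u z)"
  proof (rule integrable_bounded_mult[OF u, where B="\<bar>B\<bar>"])
    show "\<bar>indicator D z * \<phi> z\<bar> \<le> \<bar>B\<bar>" for z
      using bound[of z] by (cases "z \<in> D") auto
  qed measurable
  have "\<bar>(\<integral>z. indicator D z * \<Phi> z * u z \<partial>lborel) - (\<integral>z. indicator D z * \<phi> z * u z \<partial>lborel)\<bar>
      = \<bar>\<integral>z. indicator D z * \<Phi> z * u z - indicator D z * \<phi> z * u z \<partial>lborel\<bar>"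
    using i1 i2 by simp
  also have "\<dots> \<le> (\<integral>z. \<bar>indicator D z * \<Phi> z * u z - indicator D z * \<phi> z * u z\<bar> \<partial>lborel)"
    by (rule integral_abs_bound)
  also have "\<dots> \<le> (\<integral>z. e * \<bar>u z\<bar> \<partial>lborel)"
  proof (rule integral_mono)
    show "integrable lborel (\<lambda>z. \<bar>indicator D z * \<Phi> z * u z - indicator D z * \<phi> z * u z\<bar>)"
      using i1 i2 by simp
    show "integrable lborel (\<lambda>z. e * \<bar>u z\<bar>)" using u by simp
    show "\<bar>indicator D z * \<Phi> z * u z - indicator D z * \<phi> z * u z\<bar> \<le> e * \<bar>u z\<bar>" for z
      using close[of z] e by (cases "z \<in> D") (auto simp: left_diff_distrib[symmetric] abs_mult mult_right_mono)
  qed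
  finally show ?thesis by simp
qed

lemma uniform_limit_integral_indicator:
  fixes \<Phi> :: "real \<Rightarrow> 'p \<Rightarrow> 'a::euclidean_space \<Rightarrow> real" and \<phi> :: "'p \<Rightarrow> 'a \<Rightarrow> real"
    and u :: "'a \<Rightarrow> real"
  assumes [measurable]: "D \<in> sets borel" and u: "integrable lborel u"
    and [measurable]: "\<And>s p. \<Phi> s p \<in> borel_measurable borel" "\<And>p. \<phi> p \<in> borel_measurable borel"
    and bound: "\<And>p z. p \<in> S \<Longrightarrow> z \<in> D \<Longrightarrow> \<bar>\<phi> p z\<bar> \<le> B"
    and unif: "\<And>e. 0 < e \<Longrightarrow> \<forall>\<^sub>F s in at_top. \<forall>p\<in>S. \<forall>z\<in>D. \<bar>\<Phi> s p z - \<phi> p z\<bar> \<le> e"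
  shows "uniform_limit S (\<lambda>s p. \<integral>z. indicator D z * \<Phi> s p z * u z \<partial>lborel)
    (\<lambda>p. \<integral>z. indicator D z * \<phi> p z * u z \<partial>lborel) at_top"
proof (rule uniform_limitI)
  fix e :: real assume e: "0 < e"
  define U where "U = (\<integral>z. \<bar>u z\<bar> \<partial>lborel)"
  have U: "0 \<le> U" unfolding U_def by simp
  define e' where "e' = e / (2 * (U + 1))"
  have e': "0 < e'" unfolding e'_def using e U by simp
  have "e' * U = e * (U / (2 * (U + 1)))" unfolding e'_def by simp
  also have "\<dots> < e * 1" using U e by (intro mult_strict_left_mono) simp_all
  finally have e'U: "e' * U < e" by simp
  show "\<forall>\<^sub>F s in at_top. \<forall>p\<in>S. dist (\<integral>z. indicator D z * \<Phi> s p z * u z \<partial>lborel)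
      (\<integral>z. indicator D z * \<phi> p z * u z \<partial>lborel) < e"
    using unif[OF e']
  proof (rule eventually_mono, intro ballI)
    fix s p assume "\<forall>p\<in>S. \<forall>z\<in>D. \<bar>\<Phi> s p z - \<phi> p z\<bar> \<le> e'" and p: "p \<in> S"
    then have "\<bar>(\<integral>z. indicator D z * \<Phi> s p z * u z \<partial>lborel) - (\<integral>z. indicator D z * \<phi> p z * u z \<partial>lborel)\<bar>
        \<le> e' * U"
      unfolding U_def using e' bound[OF p] by (intro integral_indicator_mult_diff_le u) auto
    then show "dist (\<integral>z. indicator D z * \<Phi> s p z * u z \<partial>lborel)
        (\<integral>z. indicator D z * \<phi> p z * u z \<partial>lborel) < e"
      using e'U by (simp add: dist_real_def)
  qed
qed

lemma uniform_limit_singleton_iff: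
  "uniform_limit {p} F L at_top \<longleftrightarrow> ((\<lambda>s. F s p) \<longlongrightarrow> L p) at_top"
  by (simp add: uniform_limit_iff tendsto_iff)

lemma borel_measurable_antimono_max:
  fixes f :: "real \<Rightarrow> real"
  assumes "\<And>r s. 0 < r \<Longrightarrow> r \<le> s \<Longrightarrow> f s \<le> f r" "0 < e"
  shows "(\<lambda>t. f (max t e)) \<in> borel_measurable borel"
proof -
  have "mono (\<lambda>t. - f (max t e))"
    by (rule monoI) (use assms in \<open>auto intro!: assms(1)\<close>)
  then have "(\<lambda>t. - (- f (max t e))) \<in> borel_measurable borel"
    using borel_measurable_mono borel_measurable_uminus by blast
  then show ?thesis by simp
qed

section \<open>Densities with exponentially equivalent tails\<close>

text \<open>Conditions (B) and (C) with their constants \<open>C0\<close> and \<open>c\<close> made explicit; the point \<open>\<theta>0\<close> only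
  records \<open>E \<noteq> {}\<close>, the theorem being trivial otherwise.\<close>
locale exp_tail_density =
  fixes nu :: "'a::euclidean_space \<Rightarrow> real" and f :: "real \<Rightarrow> real"
    and E :: "'a set" and \<kappa> :: real and c C0 :: real and \<theta>0 :: 'a
  assumes nu_nonneg: "\<And>x. 0 \<le> nu x"
    and nu_measurable[measurable]: "nu \<in> borel_measurable borel"
    and nu_integrable: "integrable lborel nu"
    and E_sphere: "E \<subseteq> sphere 0 1"
    and kappa_nonneg: "0 \<le> \<kappa>"
    and f_pos: "\<And>r. 0 < r \<Longrightarrow> 0 < f r"
    and f_antimono: "\<And>r s. 0 < r \<Longrightarrow> r \<le> s \<Longrightarrow> f s \<le> f r"
    and C0_pos: "0 < C0" and nu_le_f: "\<And>x. x \<noteq> 0 \<Longrightarrow> nu x \<le> C0 * f (norm x)"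
    and c_pos: "0 < c" and f_le_nu: "\<And>x. x \<in> GammaE E \<Longrightarrow> c * f (norm x) \<le> nu x"
    and Kfun_tendsto_0: "(Kfun f TYPE('a) \<longlongrightarrow> 0) at_top"
    and ratio_tendsto: "\<And>\<theta> y. \<theta> \<in> E \<Longrightarrow>
      ((\<lambda>r. nu (r *\<^sub>R \<theta> - y) / nu (r *\<^sub>R \<theta>)) \<longlongrightarrow> exp (\<kappa> * (\<theta> \<bullet> y))) at_top"
    and \<theta>0_in_E: "\<theta>0 \<in> E"
begin

lemma norm_in_E: "\<theta> \<in> E \<Longrightarrow> norm \<theta> = 1"
  using E_sphere by auto

lemma nu_ray_bounds:
  assumes "\<theta> \<in> E" "0 < s"
  shows "c * f s \<le> nu (s *\<^sub>R \<theta>)" "nu (s *\<^sub>R \<theta>) \<le> C0 * f s" "0 < nu (s *\<^sub>R \<theta>)"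
proof -
  have n: "norm (s *\<^sub>R \<theta>) = s" using norm_in_E[OF assms(1)] assms(2) by simp
  have "s *\<^sub>R \<theta> \<in> GammaE E"
    using assms n unfolding GammaE_def by auto
  from f_le_nu[OF this] show lower: "c * f s \<le> nu (s *\<^sub>R \<theta>)" using n by simp
  have "s *\<^sub>R \<theta> \<noteq> 0" using n assms by auto
  from nu_le_f[OF this] show "nu (s *\<^sub>R \<theta>) \<le> C0 * f s" using n by simp
  show "0 < nu (s *\<^sub>R \<theta>)" using lower c_pos f_pos[OF assms(2)]
    by (smt (verit) mult_pos_pos)
qed

text \<open>Condition (C) along \<open>\<theta>0\<close>, read through \<open>c f \<le> \<nu> \<le> C0 f\<close> on \<open>\<Gamma>\<^sub>E\<close>, makes \<open>f\<close> long-tailed.\<close>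
lemma f_shift_le:
  assumes "0 \<le> R"
  obtains M S0 where "0 < M" "R < S0" "\<And>t. S0 \<le> t \<Longrightarrow> f (t - R) \<le> M * f t"
proof -
  define e where "e = exp (\<kappa> * (\<theta>0 \<bullet> (R *\<^sub>R \<theta>0))) + 1"
  have e: "0 < e" unfolding e_def by (smt (verit) exp_gt_zero)
  have "\<forall>\<^sub>F r in at_top. nu (r *\<^sub>R \<theta>0 - R *\<^sub>R \<theta>0) / nu (r *\<^sub>R \<theta>0) < e"
    using ratio_tendsto[OF \<theta>0_in_E] unfolding e_def by (rule order_tendstoD) simp
  then obtain N where N: "\<And>r. N \<le> r \<Longrightarrow> nu (r *\<^sub>R \<theta>0 - R *\<^sub>R \<theta>0) / nu (r *\<^sub>R \<theta>0) < e"
    by (auto simp: eventually_at_top_linorder)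
  show thesis
  proof
    show "0 < e * C0 / c" using e C0_pos c_pos by simp
    show "R < max N (R + 1)" by simp
    fix t assume t: "max N (R + 1) \<le> t"
    have tR: "0 < t - R" "0 < t" using t assms by auto
    have pos: "0 < nu (t *\<^sub>R \<theta>0)" by (rule nu_ray_bounds(3)[OF \<theta>0_in_E tR(2)])
    have "c * f (t - R) \<le> nu ((t - R) *\<^sub>R \<theta>0)" by (rule nu_ray_bounds(1)[OF \<theta>0_in_E tR(1)])
    also have "\<dots> = nu (t *\<^sub>R \<theta>0 - R *\<^sub>R \<theta>0)" by (simp add: scaleR_diff_left)
    also have "\<dots> \<le> e * nu (t *\<^sub>R \<theta>0)" using N[of t] t pos by (simp add: divide_less_eq)
    also have "\<dots> \<le> e * (C0 * f t)" using nu_ray_bounds(2)[OF \<theta>0_in_E tR(2)] e by simp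
    finally show "f (t - R) \<le> e * C0 / c * f t" using c_pos by (simp add: field_simps)
  qed
qed

lemma f_norm_diff_le:
  assumes "0 \<le> R"
  obtains M S0 where "0 < M" "R < S0"
    "\<And>x w :: 'a. S0 \<le> norm x \<Longrightarrow> norm w \<le> R \<Longrightarrow> f (norm (x - w)) \<le> M * f (norm x)"
proof -
  obtain M S0 where M: "0 < M" "R < S0" "\<And>t. S0 \<le> t \<Longrightarrow> f (t - R) \<le> M * f t"
    using f_shift_le[OF assms] by blast
  have diff: "f (norm (x - w)) \<le> M * f (norm x)" if x: "S0 \<le> norm x" and w: "norm w \<le> R" for x w :: 'a
  proof -
    have "norm x - R \<le> norm (x - w)" using w norm_triangle_ineq2[of x w] by simp
    then have "f (norm (x - w)) \<le> f (norm x - R)" using x M by (intro f_antimono) auto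
    also have "\<dots> \<le> M * f (norm x)" using M x by simp
    finally show ?thesis .
  qed
  from that[OF M(1,2) diff] show thesis .
qed

lemma borel_measurable_f_max[measurable]: "0 < e \<Longrightarrow> (\<lambda>t. f (max t e)) \<in> borel_measurable borel"
  by (rule borel_measurable_antimono_max[OF f_antimono])

lemma Kfun_eventually_le:
  assumes "0 < \<delta>"
  obtains r0 where "\<And>r. r0 \<le> r \<Longrightarrow> Kfun f TYPE('a) r \<le> ennreal \<delta>"
proof -
  have "\<forall>\<^sub>F r in at_top. Kfun f TYPE('a) r < ennreal \<delta>"
    using Kfun_tendsto_0 by (rule order_tendstoD) (use assms in simp)
  then show thesis using that by (auto simp: eventually_at_top_linorder intro: less_imp_le)
qed

text \<open>Replacing \<open>f\<close> by \<open>f (max _ r)\<close>, which agrees with it where the indicator is nonzero, is only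
  there to make the integrand visibly measurable.\<close>
lemma nn_integral_f_f_le_Kfun:
  fixes x :: 'a
  assumes x: "1 < norm x" and r: "0 < r"
  shows "(\<integral>\<^sup>+ y. ennreal (indicator {y. r < norm (x - y) \<and> r < norm y} y * (f (norm (x - y)) * f (norm y))) \<partial>lborel)
    \<le> Kfun f TYPE('a) r * ennreal (f (norm x))"
proof -
  have fx: "0 < f (norm x)" using x by (intro f_pos) linarith
  let ?S = "{y. r < norm (x - y) \<and> r < norm y}"
  let ?h = "\<lambda>y. indicator ?S y * ennreal (f (max (norm (x - y)) r) * f (max (norm y) r) / f (norm x))"
  have "(\<integral>\<^sup>+ y. ennreal (indicator ?S y * (f (norm (x - y)) * f (norm y))) \<partial>lborel)
     = (\<integral>\<^sup>+ y. ?h y * ennreal (f (norm x)) \<partial>lborel)"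
  proof (intro nn_integral_cong)
    fix y :: 'a
    show "ennreal (indicator ?S y * (f (norm (x - y)) * f (norm y))) = ?h y * ennreal (f (norm x))"
    proof (cases "y \<in> ?S")
      case True
      then have p: "0 < f (norm (x - y))" "0 < f (norm y)" using r by (auto intro!: f_pos)
      have m: "max (norm (x - y)) r = norm (x - y)" "max (norm y) r = norm y" using True by auto
      have "ennreal (f (norm (x - y)) * f (norm y) / f (norm x)) * ennreal (f (norm x))
          = ennreal (f (norm (x - y)) * f (norm y) / f (norm x) * f (norm x))"
        using p fx by (subst ennreal_mult') auto
      also have "\<dots> = ennreal (f (norm (x - y)) * f (norm y))" using fx by simp
      finally show ?thesis using True m by simp
    qed simp
  qed
  also have "\<dots> = (\<integral>\<^sup>+ y. ?h y \<partial>lborel) * ennreal (f (norm x))"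
    using r by (intro nn_integral_multc) measurable
  also have "(\<integral>\<^sup>+ y. ?h y \<partial>lborel)
      = (\<integral>\<^sup>+ y. indicator ?S y * ennreal (f (norm (x - y)) * f (norm y) / f (norm x)) \<partial>lborel)"
    by (intro nn_integral_cong) (auto simp: indicator_def)
  also have "\<dots> \<le> Kfun f TYPE('a) r"
    unfolding Kfun_def using x by (intro SUP_upper) auto
  finally show ?thesis by (simp add: mult_right_mono)
qed

lemma conv_eq_nn_integral:
  assumes [measurable]: "g \<in> borel_measurable borel" and "\<And>x. 0 \<le> g x"
  shows "conv nu g x = enn2real (\<integral>\<^sup>+ z. ennreal (nu (x - z) * g z) \<partial>lborel)"
  unfolding conv_def using nu_nonneg assms(2) by (intro integral_eq_nn_integral) auto

lemma borel_measurable_conv[measurable]: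
  assumes [measurable]: "g \<in> borel_measurable borel"
  shows "conv nu g \<in> borel_measurable borel"
proof -
  have "(\<lambda>x. \<integral>z. nu (x - z) * g z \<partial>lborel) \<in> borel_measurable lborel"
    by (rule lborel.borel_measurable_lebesgue_integral) measurable
  then show ?thesis unfolding conv_def[abs_def] by simp
qed

lemma nn_integral_exp_conv:
  assumes [measurable]: "g \<in> borel_measurable borel" and g0: "\<And>x. 0 \<le> g x"
  shows "(\<integral>\<^sup>+ x. ennreal (exp (v \<bullet> x)) * (\<integral>\<^sup>+ z. ennreal (nu (x - z) * g z) \<partial>lborel) \<partial>lborel)
     = (\<integral>\<^sup>+ x. ennreal (exp (v \<bullet> x) * nu x) \<partial>lborel) * (\<integral>\<^sup>+ x. ennreal (exp (v \<bullet> x) * g x) \<partial>lborel)"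
proof -
  have split: "ennreal (exp (v \<bullet> x) * nu (x - z) * g z)
      = ennreal (exp (v \<bullet> z) * g z) * ennreal (exp (v \<bullet> (x - z)) * nu (x - z))" for x z :: 'a
  proof -
    have "exp (v \<bullet> x) = exp (v \<bullet> z) * exp (v \<bullet> (x - z))"
      by (simp add: inner_diff_right exp_diff)
    then show ?thesis using g0 nu_nonneg by (simp add: ennreal_mult'[symmetric] ac_simps)
  qed
  have "(\<integral>\<^sup>+ x. ennreal (exp (v \<bullet> x)) * (\<integral>\<^sup>+ z. ennreal (nu (x - z) * g z) \<partial>lborel) \<partial>lborel)
      = (\<integral>\<^sup>+ x. (\<integral>\<^sup>+ z. ennreal (exp (v \<bullet> x) * nu (x - z) * g z) \<partial>lborel) \<partial>lborel)"
  proof (intro nn_integral_cong)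
    fix x :: 'a
    have "ennreal (exp (v \<bullet> x)) * (\<integral>\<^sup>+ z. ennreal (nu (x - z) * g z) \<partial>lborel)
        = (\<integral>\<^sup>+ z. ennreal (exp (v \<bullet> x)) * ennreal (nu (x - z) * g z) \<partial>lborel)"
      by (rule nn_integral_cmult[symmetric]) measurable
    also have "\<dots> = (\<integral>\<^sup>+ z. ennreal (exp (v \<bullet> x) * nu (x - z) * g z) \<partial>lborel)"
      by (intro nn_integral_cong) (simp add: ennreal_mult'[symmetric] mult.assoc)
    finally show "ennreal (exp (v \<bullet> x)) * (\<integral>\<^sup>+ z. ennreal (nu (x - z) * g z) \<partial>lborel)
        = (\<integral>\<^sup>+ z. ennreal (exp (v \<bullet> x) * nu (x - z) * g z) \<partial>lborel)" .
  qed
  also have "\<dots> = (\<integral>\<^sup>+ z. (\<integral>\<^sup>+ x. ennreal (exp (v \<bullet> x) * nu (x - z) * g z) \<partial>lborel) \<partial>lborel)"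
    by (rule lborel_pair.Fubini'[symmetric]) measurable
  also have "\<dots> = (\<integral>\<^sup>+ z. ennreal (exp (v \<bullet> z) * g z)
      * (\<integral>\<^sup>+ x. ennreal (exp (v \<bullet> (x - z)) * nu (x - z)) \<partial>lborel) \<partial>lborel)"
  proof (intro nn_integral_cong)
    fix z :: 'a
    show "(\<integral>\<^sup>+ x. ennreal (exp (v \<bullet> x) * nu (x - z) * g z) \<partial>lborel)
        = ennreal (exp (v \<bullet> z) * g z) * (\<integral>\<^sup>+ x. ennreal (exp (v \<bullet> (x - z)) * nu (x - z)) \<partial>lborel)"
      unfolding split by (rule nn_integral_cmult) measurable
  qed
  also have "\<dots> = (\<integral>\<^sup>+ z. ennreal (exp (v \<bullet> z) * g z) * (\<integral>\<^sup>+ x. ennreal (exp (v \<bullet> x) * nu x) \<partial>lborel) \<partial>lborel)"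
    using lborel_nn_integral_translate[where F="\<lambda>x. ennreal (exp (v \<bullet> x) * nu x)"] by simp
  also have "\<dots> = (\<integral>\<^sup>+ z. ennreal (exp (v \<bullet> z) * g z) \<partial>lborel) * (\<integral>\<^sup>+ x. ennreal (exp (v \<bullet> x) * nu x) \<partial>lborel)"
    by (rule nn_integral_multc) measurable
  finally show ?thesis by (simp add: mult.commute)
qed

text \<open>The class of densities, closed under \<open>conv nu\<close>, on which the induction runs.\<close>
definition tail_dominated :: "('a \<Rightarrow> real) \<Rightarrow> bool" where
  "tail_dominated g \<longleftrightarrow> g \<in> borel_measurable borel \<and> (\<forall>x. 0 \<le> g x) \<and> integrable lborel g \<and>
     (\<exists>Cg Rg. 0 < Cg \<and> 0 < Rg \<and> (\<forall>x. Rg \<le> norm x \<longrightarrow> g x \<le> Cg * f (norm x)))"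

lemma tail_dominatedD:
  assumes "tail_dominated g"
  shows "g \<in> borel_measurable borel" "\<And>x. 0 \<le> g x" "integrable lborel g"
    "\<exists>Cg Rg. 0 < Cg \<and> 0 < Rg \<and> (\<forall>x. Rg \<le> norm x \<longrightarrow> g x \<le> Cg * f (norm x))"
  using assms unfolding tail_dominated_def by auto

lemma nu_le_f_outside_ball: "1 \<le> norm x \<Longrightarrow> nu x \<le> C0 * f (norm x)"
  by (rule nu_le_f) auto

lemma tail_dominated_nu: "tail_dominated nu"
  unfolding tail_dominated_def
proof (intro conjI exI)
  show "\<forall>x. 1 \<le> norm x \<longrightarrow> nu x \<le> C0 * f (norm x)"
    using nu_le_f_outside_ball by blast
qed (use nu_nonneg nu_integrable C0_pos in auto)

lemma nn_integral_middle_le_Kfun: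
  fixes x :: 'a
  assumes [measurable]: "g \<in> borel_measurable borel" and g0: "\<And>x. 0 \<le> g x"
    and Cg: "0 < Cg" and gb: "\<And>x. Rg \<le> norm x \<Longrightarrow> g x \<le> Cg * f (norm x)"
    and r: "Rg \<le> r" "0 < r" and x: "1 < norm x"
  shows "(\<integral>\<^sup>+ z. ennreal (indicator {z. r < norm (x - z) \<and> r < norm z} z * (nu (x - z) * g z)) \<partial>lborel)
     \<le> ennreal (C0 * Cg) * (Kfun f TYPE('a) r * ennreal (f (norm x)))"
proof -
  let ?S = "{z. r < norm (x - z) \<and> r < norm z}"
  let ?h = "\<lambda>z. ennreal (indicator ?S z * (f (max (norm (x - z)) r) * f (max (norm z) r)))"
  have "(\<integral>\<^sup>+ z. ennreal (indicator ?S z * (nu (x - z) * g z)) \<partial>lborel)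
     \<le> (\<integral>\<^sup>+ z. ennreal (C0 * Cg) * ?h z \<partial>lborel)"
  proof (intro nn_integral_mono)
    fix z
    show "ennreal (indicator ?S z * (nu (x - z) * g z)) \<le> ennreal (C0 * Cg) * ?h z"
    proof (cases "z \<in> ?S")
      case True
      then have xz: "x - z \<noteq> 0" and zr: "Rg \<le> norm z" using r by auto
      have "nu (x - z) * g z \<le> (C0 * f (norm (x - z))) * (Cg * f (norm z))"
        using nu_le_f[OF xz] gb[OF zr] nu_nonneg[of "x - z"] g0[of z] by (intro mult_mono) auto
      also have "\<dots> = (C0 * Cg) * (indicator ?S z * (f (max (norm (x - z)) r) * f (max (norm z) r)))"
        using True by (simp add: max_def)
      finally have "ennreal (indicator ?S z * (nu (x - z) * g z))
          \<le> ennreal ((C0 * Cg) * (indicator ?S z * (f (max (norm (x - z)) r) * f (max (norm z) r))))"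
        using True by (intro ennreal_leI) simp
      then show ?thesis using C0_pos Cg by (simp add: ennreal_mult')
    qed simp
  qed
  also have "\<dots> = ennreal (C0 * Cg) * (\<integral>\<^sup>+ z. ?h z \<partial>lborel)"
    using r by (intro nn_integral_cmult) measurable
  also have "(\<integral>\<^sup>+ z. ?h z \<partial>lborel)
    = (\<integral>\<^sup>+ z. ennreal (indicator ?S z * (f (norm (x - z)) * f (norm z))) \<partial>lborel)"
    by (intro nn_integral_cong) (auto simp: indicator_def)
  also have "ennreal (C0 * Cg) * \<dots> \<le> ennreal (C0 * Cg) * (Kfun f TYPE('a) r * ennreal (f (norm x)))"
    by (intro mult_left_mono nn_integral_f_f_le_Kfun[OF x r(2)]) simp
  finally show ?thesis .
qed


text \<open>Split \<open>\<nu> * g\<close> at \<open>x\<close> into \<open>z\<close> near \<open>0\<close>, \<open>x - z\<close> near \<open>0\<close>, and the middle region controlled by \<open>K\<close>.\<close>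
lemma conv_integrand_le:
  assumes g0: "\<And>z. 0 \<le> g z" and Cg: "0 < Cg" and gb: "\<And>x. Rg \<le> norm x \<Longrightarrow> g x \<le> Cg * f (norm x)"
    and M: "0 < M" and MS: "\<And>x w :: 'a. S0 \<le> norm x \<Longrightarrow> norm w \<le> r \<Longrightarrow> f (norm (x - w)) \<le> M * f (norm x)"
    and r: "0 < r" "Rg \<le> r" and x: "S0 \<le> norm x" "2 * r < norm x"
  shows "nu (x - z) * g z \<le> C0 * M * f (norm x) * g z + Cg * M * f (norm x) * nu (x - z)
    + indicator {z. r < norm (x - z) \<and> r < norm z} z * (nu (x - z) * g z)"
proof -
  have fx: "0 < f (norm x)" using x r by (intro f_pos) linarith
  have nonneg: "0 \<le> C0 * M * f (norm x) * g z" "0 \<le> Cg * M * f (norm x) * nu (x - z)"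
    "0 \<le> indicator {z. r < norm (x - z) \<and> r < norm z} z * (nu (x - z) * g z)"
    using C0_pos Cg M fx g0[of z] nu_nonneg[of "x - z"] by auto
  consider "norm z \<le> r" | "r < norm z" "norm (x - z) \<le> r" | "r < norm (x - z)" "r < norm z"
    by fastforce
  then show ?thesis
  proof cases
    case 1
    have "norm x - r \<le> norm (x - z)" using 1 norm_triangle_ineq2[of x z] by simp
    then have "x - z \<noteq> 0" using x r by auto
    then have "nu (x - z) \<le> C0 * f (norm (x - z))" by (rule nu_le_f)
    also have "\<dots> \<le> C0 * (M * f (norm x))" using MS[OF x(1) 1] C0_pos by simp
    finally have "nu (x - z) * g z \<le> (C0 * (M * f (norm x))) * g z"
      using g0[of z] by (rule mult_right_mono)
    then have "nu (x - z) * g z \<le> C0 * M * f (norm x) * g z" by (simp add: ac_simps)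
    with nonneg show ?thesis by linarith
  next
    case 2
    have "norm x - r \<le> norm z" using 2 norm_triangle_ineq2[of x "x - z"] by simp
    then have "g z \<le> Cg * f (norm (x - (x - z)))" using gb x r by auto
    also have "\<dots> \<le> Cg * (M * f (norm x))" using MS[OF x(1) 2(2)] Cg by simp
    finally have "nu (x - z) * g z \<le> nu (x - z) * (Cg * (M * f (norm x)))"
      using nu_nonneg[of "x - z"] by (rule mult_left_mono)
    then have "nu (x - z) * g z \<le> Cg * M * f (norm x) * nu (x - z)" by (simp add: ac_simps)
    with nonneg show ?thesis by linarith
  next
    case 3
    then show ?thesis using nonneg by simp
  qed
qed

lemma nn_integral_conv_le:
  assumes g: "tail_dominated g" and Cg: "0 < Cg" and gb: "\<And>x. Rg \<le> norm x \<Longrightarrow> g x \<le> Cg * f (norm x)"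
    and M: "0 < M" and MS: "\<And>x w :: 'a. S0 \<le> norm x \<Longrightarrow> norm w \<le> r \<Longrightarrow> f (norm (x - w)) \<le> M * f (norm x)"
    and r: "0 < r" "Rg \<le> r" "Kfun f TYPE('a) r \<le> 1"
    and x: "S0 \<le> norm x" "2 * r < norm x" "1 < norm x"
  shows "(\<integral>\<^sup>+ z. ennreal (nu (x - z) * g z) \<partial>lborel)
    \<le> ennreal ((C0 * M * (\<integral>x. g x \<partial>lborel) + Cg * M * (\<integral>x. nu x \<partial>lborel) + C0 * Cg) * f (norm x))"
proof -
  note [measurable] = tail_dominatedD(1)[OF g]
  have g0: "\<And>x. 0 \<le> g x" and gi: "integrable lborel g" using tail_dominatedD(2,3)[OF g] by auto
  have fx: "0 < f (norm x)" using x by (intro f_pos) linarith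
  let ?S = "{z. r < norm (x - z) \<and> r < norm z}"
  define K1 where "K1 = C0 * M * f (norm x)"
  define K2 where "K2 = Cg * M * f (norm x)"
  have K: "0 \<le> K1" "0 \<le> K2" unfolding K1_def K2_def using C0_pos Cg M fx by auto
  have "ennreal (nu (x - z) * g z)
      \<le> ennreal (K1 * g z) + ennreal (K2 * nu (x - z)) + ennreal (indicator ?S z * (nu (x - z) * g z))" for z
  proof -
    have "ennreal (nu (x - z) * g z)
        \<le> ennreal (K1 * g z + K2 * nu (x - z) + indicator ?S z * (nu (x - z) * g z))"
      unfolding K1_def K2_def by (intro ennreal_leI conv_integrand_le[OF g0 Cg gb M MS r(1,2) x(1,2)])
    then show ?thesis using K g0[of z] nu_nonneg[of "x - z"] by (simp add: ennreal_plus)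
  qed
  then have "(\<integral>\<^sup>+ z. ennreal (nu (x - z) * g z) \<partial>lborel)
      \<le> (\<integral>\<^sup>+ z. ennreal (K1 * g z) + ennreal (K2 * nu (x - z))
          + ennreal (indicator ?S z * (nu (x - z) * g z)) \<partial>lborel)"
    by (intro nn_integral_mono)
  also have "\<dots> = (\<integral>\<^sup>+ z. ennreal (K1 * g z) + ennreal (K2 * nu (x - z)) \<partial>lborel)
      + (\<integral>\<^sup>+ z. ennreal (indicator ?S z * (nu (x - z) * g z)) \<partial>lborel)"
    by (rule nn_integral_add) measurable
  also have "(\<integral>\<^sup>+ z. ennreal (K1 * g z) + ennreal (K2 * nu (x - z)) \<partial>lborel)
      = (\<integral>\<^sup>+ z. ennreal (K1 * g z) \<partial>lborel) + (\<integral>\<^sup>+ z. ennreal (K2 * nu (x - z)) \<partial>lborel)"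
    by (rule nn_integral_add) measurable
  also have "(\<integral>\<^sup>+ z. ennreal (K1 * g z) \<partial>lborel) = ennreal (K1 * (\<integral>x. g x \<partial>lborel))"
    using K g0 gi by (subst nn_integral_eq_integral) auto
  also have "(\<integral>\<^sup>+ z. ennreal (K2 * nu (x - z)) \<partial>lborel) = (\<integral>\<^sup>+ z. ennreal (K2 * nu z) \<partial>lborel)"
    by (rule lborel_nn_integral_reflect[where F="\<lambda>z. ennreal (K2 * nu z)"]) measurable
  also have "\<dots> = ennreal (K2 * (\<integral>x. nu x \<partial>lborel))"
    using K nu_nonneg nu_integrable by (subst nn_integral_eq_integral) auto
  also have "ennreal (K1 * (\<integral>x. g x \<partial>lborel)) + ennreal (K2 * (\<integral>x. nu x \<partial>lborel))
      + (\<integral>\<^sup>+ z. ennreal (indicator ?S z * (nu (x - z) * g z)) \<partial>lborel)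
      \<le> ennreal (K1 * (\<integral>x. g x \<partial>lborel)) + ennreal (K2 * (\<integral>x. nu x \<partial>lborel))
        + ennreal (C0 * Cg) * (Kfun f TYPE('a) r * ennreal (f (norm x)))"
    by (intro add_left_mono nn_integral_middle_le_Kfun[OF _ g0 Cg gb r(2) r(1) x(3)]) measurable
  also have "\<dots> \<le> ennreal (K1 * (\<integral>x. g x \<partial>lborel)) + ennreal (K2 * (\<integral>x. nu x \<partial>lborel))
        + ennreal (C0 * Cg) * (1 * ennreal (f (norm x)))"
    by (intro add_left_mono mult_left_mono mult_right_mono r) simp_all
  also have "\<dots> = ennreal (K1 * (\<integral>x. g x \<partial>lborel) + K2 * (\<integral>x. nu x \<partial>lborel) + C0 * Cg * f (norm x))"
    using K C0_pos Cg fx g0 nu_nonneg by (simp add: ennreal_plus ennreal_mult')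
  also have "K1 * (\<integral>x. g x \<partial>lborel) + K2 * (\<integral>x. nu x \<partial>lborel) + C0 * Cg * f (norm x)
      = (C0 * M * (\<integral>x. g x \<partial>lborel) + Cg * M * (\<integral>x. nu x \<partial>lborel) + C0 * Cg) * f (norm x)"
    unfolding K1_def K2_def by (simp add: algebra_simps)
  finally show ?thesis .
qed

lemma conv_tail_bound:
  assumes g: "tail_dominated g"
  obtains C R where "0 < C" "0 < R"
    "\<And>x. R \<le> norm x \<Longrightarrow> (\<integral>\<^sup>+ z. ennreal (nu (x - z) * g z) \<partial>lborel) \<le> ennreal (C * f (norm x))"
proof -
  obtain Cg Rg where Cg: "0 < Cg" and gb: "\<And>x. Rg \<le> norm x \<Longrightarrow> g x \<le> Cg * f (norm x)"
    using tail_dominatedD(4)[OF g] by auto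
  obtain r0 where r0: "\<And>r. r0 \<le> r \<Longrightarrow> Kfun f TYPE('a) r \<le> ennreal 1"
    using Kfun_eventually_le[of 1] by auto
  define r where "r = max (max Rg r0) 1"
  have r: "0 < r" "Rg \<le> r" "Kfun f TYPE('a) r \<le> 1" unfolding r_def using r0 by auto
  obtain M S0 where M: "0 < M" "r < S0"
    and MS: "\<And>x w :: 'a. S0 \<le> norm x \<Longrightarrow> norm w \<le> r \<Longrightarrow> f (norm (x - w)) \<le> M * f (norm x)"
    using f_norm_diff_le[of r] r by auto
  define C where "C = C0 * M * (\<integral>x. g x \<partial>lborel) + Cg * M * (\<integral>x. nu x \<partial>lborel) + C0 * Cg"
  define R where "R = max S0 (2 * r) + 1"
  have "0 \<le> (\<integral>x. g x \<partial>lborel)" "0 \<le> (\<integral>x. nu x \<partial>lborel)"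
    using tail_dominatedD(2)[OF g] nu_nonneg by simp_all
  then have "0 < C" unfolding C_def using C0_pos Cg M
    by (smt (verit) mult_nonneg_nonneg mult_pos_pos)
  moreover have "0 < R" unfolding R_def using M r by auto
  moreover have "(\<integral>\<^sup>+ z. ennreal (nu (x - z) * g z) \<partial>lborel) \<le> ennreal (C * f (norm x))"
    if "R \<le> norm x" for x
    unfolding C_def using that r unfolding R_def
    by (intro nn_integral_conv_le[OF g Cg gb M(1) MS r]) auto
  ultimately show thesis by (rule that)
qed

lemma tail_dominated_conv:
  assumes g: "tail_dominated g"
  shows "tail_dominated (conv nu g)"
proof -
  note [measurable] = tail_dominatedD(1)[OF g]
  have g0: "\<And>x. 0 \<le> g x" and gi: "integrable lborel g" using tail_dominatedD(2,3)[OF g] by auto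
  obtain C R where CR: "0 < C" "0 < R"
    and bound: "\<And>x. R \<le> norm x \<Longrightarrow> (\<integral>\<^sup>+ z. ennreal (nu (x - z) * g z) \<partial>lborel) \<le> ennreal (C * f (norm x))"
    using conv_tail_bound[OF g] by blast
  have eq: "conv nu g x = enn2real (\<integral>\<^sup>+ z. ennreal (nu (x - z) * g z) \<partial>lborel)" for x
    by (rule conv_eq_nn_integral[OF _ g0]) simp
  have nonneg: "0 \<le> conv nu g x" for x unfolding eq by simp
  have le: "conv nu g x \<le> C * f (norm x)" if "R \<le> norm x" for x
  proof -
    have "0 < f (norm x)" using that CR by (intro f_pos) linarith
    then show ?thesis unfolding eq using CR(1) bound[OF that] by (intro enn2real_leI) auto
  qed
  have "(\<integral>\<^sup>+ x. ennreal (conv nu g x) \<partial>lborel)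
      \<le> (\<integral>\<^sup>+ x. ennreal (exp (0 \<bullet> x)) * (\<integral>\<^sup>+ z. ennreal (nu (x - z) * g z) \<partial>lborel) \<partial>lborel)"
    unfolding eq by (intro nn_integral_mono) (simp add: ennreal_enn2real_if)
  also have "\<dots> = (\<integral>\<^sup>+ x. ennreal (exp (0 \<bullet> x) * nu x) \<partial>lborel) * (\<integral>\<^sup>+ x. ennreal (exp (0 \<bullet> x) * g x) \<partial>lborel)"
    by (rule nn_integral_exp_conv[OF _ g0]) simp
  also have "\<dots> = ennreal (\<integral>x. nu x \<partial>lborel) * ennreal (\<integral>x. g x \<partial>lborel)"
    using nn_integral_eq_integral[OF nu_integrable] nn_integral_eq_integral[OF gi] nu_nonneg g0 by simp
  also have "\<dots> < \<infinity>" by (simp add: ennreal_mult_less_top)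
  finally have "integrable lborel (conv nu g)"
    using nonneg by (intro integrableI_nonneg) auto
  then show ?thesis unfolding tail_dominated_def using nonneg le CR by auto
qed

lemma nconv_Suc: "1 \<le> n \<Longrightarrow> nconv nu (Suc n) = conv nu (nconv nu n)"
  by (cases n) (simp_all add: nconv_def)

lemma tail_dominated_nconv: "1 \<le> n \<Longrightarrow> tail_dominated (nconv nu n)"
proof (induction n rule: dec_induct)
  case base
  then show ?case by (simp add: nconv_def tail_dominated_nu)
next
  case (step n)
  then show ?case by (simp add: nconv_Suc tail_dominated_conv)
qed

lemma kappa_inner_le:
  assumes "\<theta> \<in> E" "norm z \<le> R"
  shows "\<kappa> * (\<theta> \<bullet> z) \<le> \<kappa> * R"
proof -
  have "\<theta> \<bullet> z \<le> norm \<theta> * norm z" by (rule norm_cauchy_schwarz)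
  also have "\<dots> \<le> R" using norm_in_E[OF assms(1)] assms(2) by simp
  finally show ?thesis using kappa_nonneg by (simp add: mult_left_mono)
qed

lemma exp_kappa_inner_le: "\<theta> \<in> E \<Longrightarrow> norm z \<le> R \<Longrightarrow> exp (\<kappa> * (\<theta> \<bullet> z)) \<le> exp (\<kappa> * R)"
  using kappa_inner_le by simp

lemma eventually_ratio_bounded:
  assumes g: "tail_dominated g" and R: "0 \<le> R"
  obtains B where "\<forall>\<^sub>F s in at_top. \<forall>\<theta>\<in>E. \<forall>w. norm w \<le> R \<longrightarrow> \<bar>g (s *\<^sub>R \<theta> - w) / nu (s *\<^sub>R \<theta>)\<bar> \<le> B"
proof -
  have g0: "\<And>x. 0 \<le> g x" using tail_dominatedD(2)[OF g] .
  obtain Cg Rg where Cg: "0 < Cg" "0 < Rg" and gb: "\<And>x. Rg \<le> norm x \<Longrightarrow> g x \<le> Cg * f (norm x)"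
    using tail_dominatedD(4)[OF g] by auto
  obtain M S0 where M: "0 < M" "R < S0"
    and MS: "\<And>x w :: 'a. S0 \<le> norm x \<Longrightarrow> norm w \<le> R \<Longrightarrow> f (norm (x - w)) \<le> M * f (norm x)"
    using f_norm_diff_le[OF R] by blast
  have "\<forall>\<^sub>F s in at_top. \<forall>\<theta>\<in>E. \<forall>w. norm w \<le> R \<longrightarrow> \<bar>g (s *\<^sub>R \<theta> - w) / nu (s *\<^sub>R \<theta>)\<bar> \<le> Cg * M / c"
  proof (rule eventually_at_top_linorderI[of "max S0 (R + Rg) + 1"], intro ballI allI impI)
    fix s \<theta> and w :: 'a assume s: "max S0 (R + Rg) + 1 \<le> s" and th: "\<theta> \<in> E" and w: "norm w \<le> R"
    have s0: "0 < s" using s M Cg R by auto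
    have ns: "norm (s *\<^sub>R \<theta>) = s" using norm_in_E[OF th] s0 by simp
    have fs: "0 < f s" using s0 by (intro f_pos)
    have lo: "c * f s \<le> nu (s *\<^sub>R \<theta>)" and pos: "0 < nu (s *\<^sub>R \<theta>)" using nu_ray_bounds[OF th s0] by auto
    have "s - R \<le> norm (s *\<^sub>R \<theta> - w)" using norm_triangle_ineq2[of "s *\<^sub>R \<theta>" w] ns w by simp
    then have "g (s *\<^sub>R \<theta> - w) \<le> Cg * f (norm (s *\<^sub>R \<theta> - w))" using s by (intro gb) auto
    also have "\<dots> \<le> Cg * (M * f s)" using MS[of "s *\<^sub>R \<theta>" w] ns s w Cg by simp
    finally have "g (s *\<^sub>R \<theta> - w) / nu (s *\<^sub>R \<theta>) \<le> Cg * M * f s / (c * f s)"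
      using lo pos g0 c_pos fs Cg M by (intro frac_le) (auto simp: ac_simps)
    also have "\<dots> = Cg * M / c" using fs by simp
    finally show "\<bar>g (s *\<^sub>R \<theta> - w) / nu (s *\<^sub>R \<theta>)\<bar> \<le> Cg * M / c"
      using g0 pos by simp
  qed
  then show thesis by (rule that)
qed


subsection \<open>Exponential moments\<close>

lemma integral_annulus_ratio_le:
  assumes g: "tail_dominated g" and Cg: "0 < Cg" and gb: "\<And>x. Rg \<le> norm x \<Longrightarrow> g x \<le> Cg * f (norm x)"
    and r: "Rg \<le> r" "0 < r" and K: "Kfun f TYPE('a) r \<le> ennreal \<delta>" "0 \<le> \<delta>"
    and th: "\<theta> \<in> E" and R: "r \<le> R" and s: "R + r + 1 < s"
  shows "(\<integral>z. indicator {z. r < norm z \<and> norm z \<le> R} z * (nu (s *\<^sub>R \<theta> - z) / nu (s *\<^sub>R \<theta>)) * g z \<partial>lborel)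
    \<le> C0 * Cg * \<delta> / c"
proof -
  note [measurable] = tail_dominatedD(1)[OF g]
  have g0: "\<And>x. 0 \<le> g x" using tail_dominatedD(2)[OF g] .
  let ?A = "{z. r < norm z \<and> norm z \<le> R}"
  let ?x = "s *\<^sub>R \<theta>"
  let ?S = "{z. r < norm (?x - z) \<and> r < norm z}"
  have s0: "0 < s" using s r R by linarith
  have ns: "norm ?x = s" using norm_in_E[OF th] s0 by simp
  have x1: "1 < norm ?x" using ns s r R by linarith
  have fs: "0 < f s" using s0 by (rule f_pos)
  have lo: "c * f s \<le> nu ?x" and pos: "0 < nu ?x" using nu_ray_bounds[OF th s0] by auto
  have "(\<integral>\<^sup>+ z. ennreal (indicator ?A z * (nu (?x - z) / nu ?x) * g z) \<partial>lborel)
      \<le> (\<integral>\<^sup>+ z. ennreal (1 / nu ?x) * ennreal (indicator ?S z * (nu (?x - z) * g z)) \<partial>lborel)"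
  proof (intro nn_integral_mono)
    fix z
    show "ennreal (indicator ?A z * (nu (?x - z) / nu ?x) * g z)
        \<le> ennreal (1 / nu ?x) * ennreal (indicator ?S z * (nu (?x - z) * g z))"
    proof (cases "z \<in> ?A")
      case True
      have "s - R \<le> norm (?x - z)" using norm_triangle_ineq2[of ?x z] ns True by simp
      then have "z \<in> ?S" using True s by auto
      then show ?thesis using True pos nu_nonneg[of "?x - z"] g0[of z]
        by (simp add: ennreal_mult'[symmetric])
    qed simp
  qed
  also have "\<dots> = ennreal (1 / nu ?x) * (\<integral>\<^sup>+ z. ennreal (indicator ?S z * (nu (?x - z) * g z)) \<partial>lborel)"
    by (intro nn_integral_cmult) measurable
  also have "\<dots> \<le> ennreal (1 / nu ?x) * (ennreal (C0 * Cg) * (Kfun f TYPE('a) r * ennreal (f (norm ?x))))"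
    by (intro mult_left_mono nn_integral_middle_le_Kfun[OF _ g0 Cg gb r x1] zero_le) simp
  also have "\<dots> \<le> ennreal (1 / nu ?x) * (ennreal (C0 * Cg) * (ennreal \<delta> * ennreal (f (norm ?x))))"
    by (intro mult_left_mono mult_right_mono K) simp_all
  also have "\<dots> = ennreal (C0 * Cg * \<delta> * f s / nu ?x)"
    using pos C0_pos Cg K(2) fs ns by (simp add: ennreal_mult'[symmetric] ac_simps)
  also have "\<dots> \<le> ennreal (C0 * Cg * \<delta> / c)"
  proof (intro ennreal_leI)
    have "C0 * Cg * \<delta> * f s / nu ?x \<le> C0 * Cg * \<delta> * f s / (c * f s)"
      using lo pos c_pos fs C0_pos Cg K(2) by (intro divide_left_mono) auto
    also have "\<dots> = C0 * Cg * \<delta> / c" using fs by simp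
    finally show "C0 * Cg * \<delta> * f s / nu ?x \<le> C0 * Cg * \<delta> / c" .
  qed
  finally have le: "(\<integral>\<^sup>+ z. ennreal (indicator ?A z * (nu (?x - z) / nu ?x) * g z) \<partial>lborel)
      \<le> ennreal (C0 * Cg * \<delta> / c)" .
  have "(\<integral>z. indicator ?A z * (nu (?x - z) / nu ?x) * g z \<partial>lborel)
      = enn2real (\<integral>\<^sup>+ z. ennreal (indicator ?A z * (nu (?x - z) / nu ?x) * g z) \<partial>lborel)"
    using pos nu_nonneg g0 by (intro integral_eq_nn_integral) auto
  also have "\<dots> \<le> C0 * Cg * \<delta> / c"
    using le C0_pos Cg K(2) c_pos by (intro enn2real_leI) auto
  finally show ?thesis .
qed

text \<open>Since \<open>exp (\<kappa> * (\<theta> \<bullet> z))\<close> is the limit of \<open>\<nu> (s\<theta> - z) / \<nu> (s\<theta>)\<close>, the bound of the previous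
  lemma passes to the exponential moment.\<close>
lemma nn_integral_exp_annulus_le:
  assumes g: "tail_dominated g" and Cg: "0 < Cg" and gb: "\<And>x. Rg \<le> norm x \<Longrightarrow> g x \<le> Cg * f (norm x)"
    and r: "Rg \<le> r" "0 < r" and K: "Kfun f TYPE('a) r \<le> ennreal \<delta>" "0 \<le> \<delta>"
    and th: "\<theta> \<in> E" and R: "r \<le> R"
  shows "(\<integral>\<^sup>+ z. ennreal (indicator {z. r < norm z \<and> norm z \<le> R} z * exp (\<kappa> * (\<theta> \<bullet> z)) * g z) \<partial>lborel)
    \<le> ennreal (C0 * Cg * \<delta> / c)"
proof -
  note [measurable] = tail_dominatedD(1)[OF g]
  have g0: "\<And>x. 0 \<le> g x" and gi: "integrable lborel g" using tail_dominatedD(2,3)[OF g] by auto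
  let ?A = "{z. r < norm z \<and> norm z \<le> R}"
  define J where "J s = (\<integral>z. indicator ?A z * (nu (s *\<^sub>R \<theta> - z) / nu (s *\<^sub>R \<theta>)) * g z \<partial>lborel)" for s
  have R0: "0 \<le> R" using r R by linarith
  obtain B where B: "\<forall>\<^sub>F s in at_top. \<forall>\<theta>\<in>E. \<forall>w. norm w \<le> R \<longrightarrow> \<bar>nu (s *\<^sub>R \<theta> - w) / nu (s *\<^sub>R \<theta>)\<bar> \<le> B"
    using eventually_ratio_bounded[OF tail_dominated_nu R0] by blast
  have lim: "(J \<longlongrightarrow> (\<integral>z. indicator ?A z * exp (\<kappa> * (\<theta> \<bullet> z)) * g z \<partial>lborel)) at_top"
    unfolding J_def
  proof (rule tendsto_integral_indicator_dominated[where B=B])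
    show "?A \<in> sets borel" by measurable
    show "integrable lborel g" by (rule gi)
    show "(\<lambda>z. nu (s *\<^sub>R \<theta> - z) / nu (s *\<^sub>R \<theta>)) \<in> borel_measurable borel" for s by measurable
    show "(\<lambda>z. exp (\<kappa> * (\<theta> \<bullet> z))) \<in> borel_measurable borel" by measurable
    show "((\<lambda>s. nu (s *\<^sub>R \<theta> - z) / nu (s *\<^sub>R \<theta>)) \<longlongrightarrow> exp (\<kappa> * (\<theta> \<bullet> z))) at_top" for z
      by (rule ratio_tendsto[OF th])
    show "\<forall>\<^sub>F s in at_top. \<forall>z\<in>?A. \<bar>nu (s *\<^sub>R \<theta> - z) / nu (s *\<^sub>R \<theta>)\<bar> \<le> B"
      using B by eventually_elim (use th in auto)
  qed
  have ev: "\<forall>\<^sub>F s in at_top. J s \<le> C0 * Cg * \<delta> / c"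
    using eventually_gt_at_top[of "R + r + 1"] unfolding J_def
    by eventually_elim (rule integral_annulus_ratio_le[OF g Cg gb r K th R])
  have le: "(\<integral>z. indicator ?A z * exp (\<kappa> * (\<theta> \<bullet> z)) * g z \<partial>lborel) \<le> C0 * Cg * \<delta> / c"
    using tendsto_upperbound[OF lim ev] by simp
  have "integrable lborel (\<lambda>z. indicator ?A z * exp (\<kappa> * (\<theta> \<bullet> z)) * g z)"
  proof (rule integrable_bounded_mult[OF gi])
    show "\<bar>indicator ?A z * exp (\<kappa> * (\<theta> \<bullet> z))\<bar> \<le> exp (\<kappa> * R)" for z
      using exp_kappa_inner_le[OF th, of z R] by (cases "z \<in> ?A") auto
  qed measurable
  then have "(\<integral>\<^sup>+ z. ennreal (indicator ?A z * exp (\<kappa> * (\<theta> \<bullet> z)) * g z) \<partial>lborel)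
      = ennreal (\<integral>z. indicator ?A z * exp (\<kappa> * (\<theta> \<bullet> z)) * g z \<partial>lborel)"
    using g0 by (intro nn_integral_eq_integral) auto
  also have "\<dots> \<le> ennreal (C0 * Cg * \<delta> / c)" using le by (rule ennreal_leI)
  finally show ?thesis .
qed

lemma nn_integral_exp_tail_le:
  assumes g: "tail_dominated g" and Cg: "0 < Cg" and gb: "\<And>x. Rg \<le> norm x \<Longrightarrow> g x \<le> Cg * f (norm x)"
    and r: "Rg \<le> r" "0 < r" and K: "Kfun f TYPE('a) r \<le> ennreal \<delta>" "0 \<le> \<delta>" and th: "\<theta> \<in> E"
  shows "(\<integral>\<^sup>+ z. ennreal (indicator {z. r < norm z} z * exp (\<kappa> * (\<theta> \<bullet> z)) * g z) \<partial>lborel)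
    \<le> ennreal (C0 * Cg * \<delta> / c)"
proof -
  note [measurable] = tail_dominatedD(1)[OF g]
  have g0: "\<And>x. 0 \<le> g x" using tail_dominatedD(2)[OF g] .
  let ?A = "\<lambda>k::nat. {z. r < norm z \<and> norm z \<le> r + real k}"
  let ?F = "\<lambda>k z. ennreal (indicator (?A k) z * exp (\<kappa> * (\<theta> \<bullet> z)) * g z)"
  let ?G = "\<lambda>z. ennreal (indicator {z. r < norm z} z * exp (\<kappa> * (\<theta> \<bullet> z)) * g z)"
  have "incseq ?F"
  proof (intro monoI le_funI)
    fix k l :: nat and z assume "k \<le> l"
    then have "?A k \<subseteq> ?A l" by auto
    then show "?F k z \<le> ?F l z" using g0[of z]
      by (intro ennreal_leI mult_right_mono) (auto simp: indicator_def)
  qed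
  moreover have "(SUP k. ?F k z) = ?G z" for z
  proof (cases "r < norm z")
    case True
    define k0 where "k0 = nat \<lceil>norm z - r\<rceil>"
    have "z \<in> ?A k0" unfolding k0_def using True by auto linarith
    then have "?F k0 z = ?G z" using True by simp
    moreover have "?F k z \<le> ?G z" for k
      using True g0[of z] by (intro ennreal_leI) (auto simp: indicator_def)
    ultimately show ?thesis
      by (intro antisym SUP_least SUP_upper2[of k0]) auto
  qed simp
  ultimately have "(\<integral>\<^sup>+ z. ?G z \<partial>lborel) = (SUP k. \<integral>\<^sup>+ z. ?F k z \<partial>lborel)"
    by (subst nn_integral_monotone_convergence_SUP[symmetric]) simp_all
  also have "\<dots> \<le> ennreal (C0 * Cg * \<delta> / c)"
    using nn_integral_exp_annulus_le[OF g Cg gb r K th] r by (intro SUP_least) simp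
  finally show ?thesis .
qed

lemma integral_exp_tail_le:
  assumes g: "tail_dominated g" and Cg: "0 < Cg" and "\<And>x. Rg \<le> norm x \<Longrightarrow> g x \<le> Cg * f (norm x)"
    and "Rg \<le> r" "0 < r" and K: "Kfun f TYPE('a) r \<le> ennreal \<delta>" "0 \<le> \<delta>" and "\<theta> \<in> E"
  shows "(\<integral>z. indicator {z. r < norm z} z * exp (\<kappa> * (\<theta> \<bullet> z)) * g z \<partial>lborel) \<le> C0 * Cg * \<delta> / c"
proof -
  note [measurable] = tail_dominatedD(1)[OF g]
  have g0: "\<And>x. 0 \<le> g x" using tail_dominatedD(2)[OF g] .
  have "(\<integral>z. indicator {z. r < norm z} z * exp (\<kappa> * (\<theta> \<bullet> z)) * g z \<partial>lborel)
     = enn2real (\<integral>\<^sup>+ z. ennreal (indicator {z. r < norm z} z * exp (\<kappa> * (\<theta> \<bullet> z)) * g z) \<partial>lborel)"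
    using g0 by (intro integral_eq_nn_integral) auto
  also have "\<dots> \<le> C0 * Cg * \<delta> / c"
    using nn_integral_exp_tail_le[OF assms] C0_pos Cg c_pos K(2) by (intro enn2real_leI) auto
  finally show ?thesis .
qed

lemma exp_moment_bounded:
  assumes g: "tail_dominated g"
  obtains B where "\<And>\<theta>. \<theta> \<in> E \<Longrightarrow> integrable lborel (\<lambda>z. exp (\<kappa> * (\<theta> \<bullet> z)) * g z)"
    "\<And>\<theta>. \<theta> \<in> E \<Longrightarrow> (\<integral>z. exp (\<kappa> * (\<theta> \<bullet> z)) * g z \<partial>lborel) \<le> B"
proof -
  note [measurable] = tail_dominatedD(1)[OF g]
  have g0: "\<And>x. 0 \<le> g x" and gi: "integrable lborel g" using tail_dominatedD(2,3)[OF g] by auto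
  obtain Cg Rg where Cg: "0 < Cg" "0 < Rg" and gb: "\<And>x. Rg \<le> norm x \<Longrightarrow> g x \<le> Cg * f (norm x)"
    using tail_dominatedD(4)[OF g] by auto
  obtain r0 where r0: "\<And>r. r0 \<le> r \<Longrightarrow> Kfun f TYPE('a) r \<le> ennreal 1"
    using Kfun_eventually_le[of 1] by auto
  define r where "r = max (max Rg r0) 1"
  have r: "0 < r" "Rg \<le> r" "Kfun f TYPE('a) r \<le> ennreal 1" unfolding r_def using r0 by auto
  define B where "B = exp (\<kappa> * r) * (\<integral>x. g x \<partial>lborel) + C0 * Cg / c"
  have nn_le: "(\<integral>\<^sup>+ z. ennreal (exp (\<kappa> * (\<theta> \<bullet> z)) * g z) \<partial>lborel) \<le> ennreal B" if th: "\<theta> \<in> E" for \<theta>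
  proof -
    let ?tail = "\<lambda>z. ennreal (indicator {z. r < norm z} z * exp (\<kappa> * (\<theta> \<bullet> z)) * g z)"
    have "ennreal (exp (\<kappa> * (\<theta> \<bullet> z)) * g z) \<le> ennreal (exp (\<kappa> * r) * g z) + ?tail z" for z
    proof (cases "r < norm z")
      case False
      then have "exp (\<kappa> * (\<theta> \<bullet> z)) * g z \<le> exp (\<kappa> * r) * g z"
        using exp_kappa_inner_le[OF th, of z r] g0[of z] by (intro mult_right_mono) auto
      then show ?thesis by (simp add: add_increasing2 ennreal_leI)
    qed simp
    then have "(\<integral>\<^sup>+ z. ennreal (exp (\<kappa> * (\<theta> \<bullet> z)) * g z) \<partial>lborel)
        \<le> (\<integral>\<^sup>+ z. ennreal (exp (\<kappa> * r) * g z) + ?tail z \<partial>lborel)"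
      by (intro nn_integral_mono)
    also have "\<dots> = (\<integral>\<^sup>+ z. ennreal (exp (\<kappa> * r) * g z) \<partial>lborel) + (\<integral>\<^sup>+ z. ?tail z \<partial>lborel)"
      by (rule nn_integral_add) measurable
    also have "(\<integral>\<^sup>+ z. ennreal (exp (\<kappa> * r) * g z) \<partial>lborel) = ennreal (exp (\<kappa> * r) * (\<integral>x. g x \<partial>lborel))"
      using gi g0 by (subst nn_integral_eq_integral) auto
    also have "(\<integral>\<^sup>+ z. ?tail z \<partial>lborel) \<le> ennreal (C0 * Cg * 1 / c)"
      by (rule nn_integral_exp_tail_le[OF g Cg(1) gb r(2) r(1) r(3) zero_le_one th])
    finally show ?thesis
      unfolding B_def using g0 C0_pos Cg c_pos by (simp add: ennreal_plus)
  qed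
  show thesis
  proof (rule that)
    fix \<theta> assume th: "\<theta> \<in> E"
    show int: "integrable lborel (\<lambda>z. exp (\<kappa> * (\<theta> \<bullet> z)) * g z)"
      using nn_le[OF th] g0 by (intro integrableI_nonneg) (auto simp: le_less_trans)
    have "(\<integral>z. exp (\<kappa> * (\<theta> \<bullet> z)) * g z \<partial>lborel)
        = enn2real (\<integral>\<^sup>+ z. ennreal (exp (\<kappa> * (\<theta> \<bullet> z)) * g z) \<partial>lborel)"
      using g0 by (intro integral_eq_nn_integral) auto
    also have "\<dots> \<le> B"
      using nn_le[OF th] g0 C0_pos Cg c_pos unfolding B_def by (intro enn2real_leI) auto
    finally show "(\<integral>z. exp (\<kappa> * (\<theta> \<bullet> z)) * g z \<partial>lborel) \<le> B" .
  qed
qed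

definition exp_moment :: "'a \<Rightarrow> real" where
  "exp_moment \<theta> = (\<integral>z. exp (\<kappa> * (\<theta> \<bullet> z)) * nu z \<partial>lborel)"

lemma exp_moment_nu_bounded:
  obtains B where "\<And>\<theta>. \<theta> \<in> E \<Longrightarrow> 0 \<le> exp_moment \<theta> \<and> exp_moment \<theta> \<le> B"
    "\<And>\<theta>. \<theta> \<in> E \<Longrightarrow> integrable lborel (\<lambda>z. exp (\<kappa> * (\<theta> \<bullet> z)) * nu z)"
proof -
  obtain B where "\<And>\<theta>. \<theta> \<in> E \<Longrightarrow> integrable lborel (\<lambda>z. exp (\<kappa> * (\<theta> \<bullet> z)) * nu z)"
    "\<And>\<theta>. \<theta> \<in> E \<Longrightarrow> exp_moment \<theta> \<le> B"
    unfolding exp_moment_def using exp_moment_bounded[OF tail_dominated_nu] by blast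
  moreover have "0 \<le> exp_moment \<theta>" for \<theta> unfolding exp_moment_def using nu_nonneg by simp
  ultimately show thesis using that by blast
qed

lemma integral_exp_conv:
  assumes g: "tail_dominated g"
  shows "(\<integral>x. exp (\<kappa> * (\<theta> \<bullet> x)) * conv nu g x \<partial>lborel)
    = exp_moment \<theta> * (\<integral>x. exp (\<kappa> * (\<theta> \<bullet> x)) * g x \<partial>lborel)"
proof -
  note [measurable] = tail_dominatedD(1)[OF g]
  have g0: "\<And>x. 0 \<le> g x" and gi: "integrable lborel g" using tail_dominatedD(2,3)[OF g] by auto
  define H where "H x = (\<integral>\<^sup>+ z. ennreal (nu (x - z) * g z) \<partial>lborel)" for x
  have [measurable]: "H \<in> borel_measurable lborel" unfolding H_def[abs_def]
    by (rule lborel.borel_measurable_nn_integral) measurable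
  have "(\<integral>\<^sup>+ x. H x \<partial>lborel) = (\<integral>\<^sup>+ x. ennreal (exp (0 \<bullet> x)) * H x \<partial>lborel)" by simp
  also have "\<dots> = (\<integral>\<^sup>+ x. ennreal (exp (0 \<bullet> x) * nu x) \<partial>lborel) * (\<integral>\<^sup>+ x. ennreal (exp (0 \<bullet> x) * g x) \<partial>lborel)"
    unfolding H_def by (rule nn_integral_exp_conv[OF _ g0]) simp
  also have "\<dots> = ennreal (\<integral>x. nu x \<partial>lborel) * ennreal (\<integral>x. g x \<partial>lborel)"
    using nn_integral_eq_integral[OF nu_integrable] nn_integral_eq_integral[OF gi] nu_nonneg g0 by simp
  finally have "(\<integral>\<^sup>+ x. H x \<partial>lborel) \<noteq> \<infinity>" by (simp add: ennreal_mult_eq_top_iff)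
  then have finite: "AE x in lborel. H x \<noteq> \<infinity>" by (intro nn_integral_PInf_AE) simp
  have eq: "conv nu g x = enn2real (H x)" for x unfolding H_def by (rule conv_eq_nn_integral[OF _ g0]) simp
  have "(\<integral>\<^sup>+ x. ennreal (exp (\<kappa> * (\<theta> \<bullet> x)) * conv nu g x) \<partial>lborel)
      = (\<integral>\<^sup>+ x. ennreal (exp ((\<kappa> *\<^sub>R \<theta>) \<bullet> x)) * H x \<partial>lborel)"
    using finite
  proof (rule nn_integral_cong_AE[OF AE_mp], intro AE_I2 impI)
    fix x assume "H x \<noteq> \<infinity>"
    then have "ennreal (enn2real (H x)) = H x" by (simp add: less_top)
    then show "ennreal (exp (\<kappa> * (\<theta> \<bullet> x)) * conv nu g x) = ennreal (exp ((\<kappa> *\<^sub>R \<theta>) \<bullet> x)) * H x"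
      unfolding eq by (simp add: ennreal_mult')
  qed
  also have "\<dots> = (\<integral>\<^sup>+ x. ennreal (exp ((\<kappa> *\<^sub>R \<theta>) \<bullet> x) * nu x) \<partial>lborel)
      * (\<integral>\<^sup>+ x. ennreal (exp ((\<kappa> *\<^sub>R \<theta>) \<bullet> x) * g x) \<partial>lborel)"
    unfolding H_def by (rule nn_integral_exp_conv[OF _ g0]) simp
  finally have nn_eq: "(\<integral>\<^sup>+ x. ennreal (exp (\<kappa> * (\<theta> \<bullet> x)) * conv nu g x) \<partial>lborel)
     = (\<integral>\<^sup>+ x. ennreal (exp (\<kappa> * (\<theta> \<bullet> x)) * nu x) \<partial>lborel)
       * (\<integral>\<^sup>+ x. ennreal (exp (\<kappa> * (\<theta> \<bullet> x)) * g x) \<partial>lborel)"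
    by simp
  have conv_nonneg: "0 \<le> conv nu g x" for x
    using tail_dominatedD(2)[OF tail_dominated_conv[OF g]] .
  have "(\<integral>x. exp (\<kappa> * (\<theta> \<bullet> x)) * conv nu g x \<partial>lborel)
     = enn2real (\<integral>\<^sup>+ x. ennreal (exp (\<kappa> * (\<theta> \<bullet> x)) * conv nu g x) \<partial>lborel)"
    using conv_nonneg by (intro integral_eq_nn_integral) auto
  also have "\<dots> = enn2real (\<integral>\<^sup>+ x. ennreal (exp (\<kappa> * (\<theta> \<bullet> x)) * nu x) \<partial>lborel)
      * enn2real (\<integral>\<^sup>+ x. ennreal (exp (\<kappa> * (\<theta> \<bullet> x)) * g x) \<partial>lborel)"
    unfolding nn_eq by (rule enn2real_mult)
  also have "enn2real (\<integral>\<^sup>+ x. ennreal (exp (\<kappa> * (\<theta> \<bullet> x)) * nu x) \<partial>lborel) = exp_moment \<theta>"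
    unfolding exp_moment_def using nu_nonneg by (intro integral_eq_nn_integral[symmetric]) auto
  also have "enn2real (\<integral>\<^sup>+ x. ennreal (exp (\<kappa> * (\<theta> \<bullet> x)) * g x) \<partial>lborel)
      = (\<integral>x. exp (\<kappa> * (\<theta> \<bullet> x)) * g x \<partial>lborel)"
    using g0 by (intro integral_eq_nn_integral[symmetric]) auto
  finally show ?thesis .
qed

lemma integral_exp_nconv:
  assumes "1 \<le> n"
  shows "(\<integral>x. exp (\<kappa> * (\<theta> \<bullet> x)) * nconv nu n x \<partial>lborel) = exp_moment \<theta> ^ n"
  using assms
proof (induction n rule: dec_induct)
  case base
  then show ?case by (simp add: nconv_def exp_moment_def)
next
  case (step n)
  then show ?case
    by (simp add: nconv_Suc integral_exp_conv[OF tail_dominated_nconv[OF step(1)]])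
qed


subsection \<open>Asymptotics of convolution ratios\<close>

lemma conv_split_cball:
  assumes g: "tail_dominated g" and x: "2 * r < norm x"
    and int: "integrable lborel (\<lambda>z. nu (x - z) * g z)"
  shows "conv nu g x / d
    = (\<integral>z. indicator (cball 0 r) z * (nu (x - z) / d) * g z \<partial>lborel)
    + (\<integral>w. indicator (cball 0 r) w * (g (x - w) / d) * nu w \<partial>lborel)
    + (\<integral>z. indicator {z. r < norm (x - z) \<and> r < norm z} z * (nu (x - z) * g z) \<partial>lborel) / d"
proof -
  note [measurable] = tail_dominatedD(1)[OF g]
  let ?A = "cball (0::'a) r" and ?B = "{z. norm (x - z) \<le> r}"
    and ?M = "{z. r < norm (x - z) \<and> r < norm z}"
  let ?h = "\<lambda>z. nu (x - z) * g z"
  have [measurable]: "?A \<in> sets borel" "?B \<in> sets borel" "?M \<in> sets borel" by measurable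
  have "conv nu g x = (\<integral>z. indicator ?A z * ?h z + indicator ?B z * ?h z + indicator ?M z * ?h z \<partial>lborel)"
    unfolding conv_def
  proof (rule Bochner_Integration.integral_cong[OF refl])
    fix z
    have "\<not> (norm z \<le> r \<and> norm (x - z) \<le> r)"
      using x norm_triangle_ineq[of z "x - z"] by auto
    then show "?h z = indicator ?A z * ?h z + indicator ?B z * ?h z + indicator ?M z * ?h z"
      by (auto simp: indicator_def)
  qed
  also have "\<dots> = (\<integral>z. indicator ?A z * ?h z \<partial>lborel) + (\<integral>z. indicator ?B z * ?h z \<partial>lborel)
      + (\<integral>z. indicator ?M z * ?h z \<partial>lborel)"
    using integrable_mult_indicator[OF _ int, of ?A] integrable_mult_indicator[OF _ int, of ?B]
      integrable_mult_indicator[OF _ int, of ?M] by simp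
  also have "(\<integral>z. indicator ?B z * ?h z \<partial>lborel) = (\<integral>w. indicator ?A w * (nu w * g (x - w)) \<partial>lborel)"
  proof -
    have "(\<integral>z. indicator ?B z * ?h z \<partial>lborel)
        = (\<integral>z. (\<lambda>w. indicator ?A w * (nu w * g (x - w))) (x - z) \<partial>lborel)"
      by (rule Bochner_Integration.integral_cong) (auto simp: indicator_def)
    also have "\<dots> = (\<integral>w. indicator ?A w * (nu w * g (x - w)) \<partial>lborel)"
      by (rule lborel_integral_reflect) measurable
    finally show ?thesis .
  qed
  finally show ?thesis by (simp add: add_divide_distrib ac_simps)
qed

lemma exp_target_split_cball:
  assumes ig: "integrable lborel (\<lambda>z. exp (\<kappa> * (\<theta> \<bullet> z)) * g z)"
    and inu: "integrable lborel (\<lambda>z. exp (\<kappa> * (\<theta> \<bullet> z)) * nu z)"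
  shows "exp (\<kappa> * (\<theta> \<bullet> y)) * ((\<integral>z. exp (\<kappa> * (\<theta> \<bullet> z)) * g z \<partial>lborel) + exp_moment \<theta> * a)
    = (\<integral>z. indicator (cball 0 r) z * exp (\<kappa> * (\<theta> \<bullet> (y + z))) * g z \<partial>lborel)
    + (\<integral>w. indicator (cball 0 r) w * (exp (\<kappa> * (\<theta> \<bullet> (y + w))) * a) * nu w \<partial>lborel)
    + exp (\<kappa> * (\<theta> \<bullet> y)) * (\<integral>z. indicator {z. r < norm z} z * exp (\<kappa> * (\<theta> \<bullet> z)) * g z \<partial>lborel)
    + exp (\<kappa> * (\<theta> \<bullet> y)) * (a * (\<integral>z. indicator {z. r < norm z} z * exp (\<kappa> * (\<theta> \<bullet> z)) * nu z \<partial>lborel))"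
proof -
  let ?e = "exp (\<kappa> * (\<theta> \<bullet> y))"
  have shift: "exp (\<kappa> * (\<theta> \<bullet> (y + z))) = ?e * exp (\<kappa> * (\<theta> \<bullet> z))" for z
    by (simp add: inner_add_right distrib_left exp_add)
  have shift': "exp (\<kappa> * (\<theta> \<bullet> (z + y))) = ?e * exp (\<kappa> * (\<theta> \<bullet> z))" for z
    by (simp add: inner_add_right distrib_left exp_add)
  have "(\<integral>z. indicator (cball 0 r) z * exp (\<kappa> * (\<theta> \<bullet> (y + z))) * g z \<partial>lborel)
      = (\<integral>z. ?e * (indicator (cball 0 r) z * (exp (\<kappa> * (\<theta> \<bullet> z)) * g z)) \<partial>lborel)"
    by (rule Bochner_Integration.integral_cong) (simp_all add: shift shift' ac_simps)
  then have a: "(\<integral>z. indicator (cball 0 r) z * exp (\<kappa> * (\<theta> \<bullet> (y + z))) * g z \<partial>lborel)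
      = ?e * (\<integral>z. indicator (cball 0 r) z * (exp (\<kappa> * (\<theta> \<bullet> z)) * g z) \<partial>lborel)"
    by simp
  have "(\<integral>w. indicator (cball 0 r) w * (exp (\<kappa> * (\<theta> \<bullet> (y + w))) * a) * nu w \<partial>lborel)
      = (\<integral>z. (?e * a) * (indicator (cball 0 r) z * (exp (\<kappa> * (\<theta> \<bullet> z)) * nu z)) \<partial>lborel)"
    by (rule Bochner_Integration.integral_cong) (simp_all add: shift shift' ac_simps)
  then have b: "(\<integral>w. indicator (cball 0 r) w * (exp (\<kappa> * (\<theta> \<bullet> (y + w))) * a) * nu w \<partial>lborel)
      = ?e * a * (\<integral>z. indicator (cball 0 r) z * (exp (\<kappa> * (\<theta> \<bullet> z)) * nu z) \<partial>lborel)"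
    by simp
  show ?thesis
    unfolding a b exp_moment_def integral_split_cball[OF ig, of r] integral_split_cball[OF inu, of r]
    by (simp add: algebra_simps)
qed

lemma integral_middle_le:
  fixes x :: 'a
  assumes g: "tail_dominated g" and Cg: "0 < Cg" and gb: "\<And>x. Rg \<le> norm x \<Longrightarrow> g x \<le> Cg * f (norm x)"
    and r: "Rg \<le> r" "0 < r" and x: "1 < norm x" and K: "Kfun f TYPE('a) r \<le> ennreal \<delta>" "0 \<le> \<delta>"
  shows "(\<integral>z. indicator {z. r < norm (x - z) \<and> r < norm z} z * (nu (x - z) * g z) \<partial>lborel)
    \<le> C0 * Cg * \<delta> * f (norm x)"
proof -
  note [measurable] = tail_dominatedD(1)[OF g]
  have g0: "\<And>x. 0 \<le> g x" using tail_dominatedD(2)[OF g] .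
  let ?M = "{z. r < norm (x - z) \<and> r < norm z}"
  have fx: "0 < f (norm x)" using x by (intro f_pos) linarith
  have "(\<integral>\<^sup>+ z. ennreal (indicator ?M z * (nu (x - z) * g z)) \<partial>lborel)
     \<le> ennreal (C0 * Cg) * (Kfun f TYPE('a) r * ennreal (f (norm x)))"
    by (rule nn_integral_middle_le_Kfun[OF _ g0 Cg gb r x]) simp
  also have "\<dots> \<le> ennreal (C0 * Cg) * (ennreal \<delta> * ennreal (f (norm x)))"
    by (intro mult_left_mono mult_right_mono K) simp_all
  also have "\<dots> = ennreal (C0 * Cg * \<delta> * f (norm x))"
    using C0_pos Cg K(2) fx by (simp add: ennreal_mult'[symmetric] ac_simps)
  finally have le: "(\<integral>\<^sup>+ z. ennreal (indicator ?M z * (nu (x - z) * g z)) \<partial>lborel)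
     \<le> ennreal (C0 * Cg * \<delta> * f (norm x))" .
  have "(\<integral>z. indicator ?M z * (nu (x - z) * g z) \<partial>lborel)
     = enn2real (\<integral>\<^sup>+ z. ennreal (indicator ?M z * (nu (x - z) * g z)) \<partial>lborel)"
    using g0 nu_nonneg by (intro integral_eq_nn_integral) auto
  also have "\<dots> \<le> C0 * Cg * \<delta> * f (norm x)"
    using le C0_pos Cg K(2) fx by (intro enn2real_leI) auto
  finally show ?thesis .
qed

text \<open>The part of \<open>(h * u) (s\<theta> - y) / \<nu> (s\<theta>)\<close> coming from \<open>u\<close> near the origin; by condition (C)
  it behaves like an integral against \<open>u\<close>.\<close>
definition ratio_integral :: "('a \<Rightarrow> real) \<Rightarrow> ('a \<Rightarrow> real) \<Rightarrow> real \<Rightarrow> real \<Rightarrow> 'a \<Rightarrow> 'a \<Rightarrow> real" where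
  "ratio_integral h u r s \<theta> y =
     (\<integral>z. indicator (cball 0 r) z * (h (s *\<^sub>R \<theta> - y - z) / nu (s *\<^sub>R \<theta>)) * u z \<partial>lborel)"

lemma conv_ratio_remainder_le:
  assumes g: "tail_dominated g" and Cg: "0 < Cg" and gb: "\<And>x. Rg \<le> norm x \<Longrightarrow> g x \<le> Cg * f (norm x)"
    and M: "0 < M" and MS: "\<And>x w :: 'a. S0 \<le> norm x \<Longrightarrow> norm w \<le> \<rho> \<Longrightarrow> f (norm (x - w)) \<le> M * f (norm x)"
    and r: "Rg \<le> r" "1 \<le> r" and K: "Kfun f TYPE('a) r \<le> ennreal \<delta>" "0 \<le> \<delta>"
    and th: "\<theta> \<in> E" and y: "norm y \<le> \<rho>" and a: "\<bar>a\<bar> \<le> Ba"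
    and s: "S0 \<le> s" "2 * r + \<rho> + 2 \<le> s"
  shows "\<bar>(\<integral>z. indicator {z. r < norm (s *\<^sub>R \<theta> - y - z) \<and> r < norm z} z
          * (nu (s *\<^sub>R \<theta> - y - z) * g z) \<partial>lborel) / nu (s *\<^sub>R \<theta>)
      - exp (\<kappa> * (\<theta> \<bullet> y)) * (\<integral>z. indicator {z. r < norm z} z * exp (\<kappa> * (\<theta> \<bullet> z)) * g z \<partial>lborel)
      - exp (\<kappa> * (\<theta> \<bullet> y))
        * (a * (\<integral>z. indicator {z. r < norm z} z * exp (\<kappa> * (\<theta> \<bullet> z)) * nu z \<partial>lborel))\<bar>
    \<le> \<delta> * (C0 * Cg * M / c + exp (\<kappa> * \<rho>) * (C0 * Cg / c) + exp (\<kappa> * \<rho>) * Ba * (C0 * C0 / c))"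
proof -
  have g0: "\<And>x. 0 \<le> g x" using tail_dominatedD(2)[OF g] .
  define x where "x = s *\<^sub>R \<theta> - y"
  have s0: "0 < s" using s r y by (smt (verit) norm_ge_zero)
  have ns: "norm (s *\<^sub>R \<theta>) = s" using norm_in_E[OF th] s0 by simp
  have "s - \<rho> \<le> norm x" unfolding x_def using norm_triangle_ineq2[of "s *\<^sub>R \<theta>" y] ns y by simp
  then have x1: "1 < norm x" using s r by auto
  have fs: "0 < f s" using s0 by (rule f_pos)
  have lo: "c * f s \<le> nu (s *\<^sub>R \<theta>)" and pos: "0 < nu (s *\<^sub>R \<theta>)" using nu_ray_bounds[OF th s0] by auto
  have fx: "f (norm x) \<le> M * f s" using MS[of "s *\<^sub>R \<theta>" y] ns s y unfolding x_def by simp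
  define Im where "Im = (\<integral>z. indicator {z. r < norm (x - z) \<and> r < norm z} z * (nu (x - z) * g z) \<partial>lborel)"
  define tg where "tg = (\<integral>z. indicator {z. r < norm z} z * exp (\<kappa> * (\<theta> \<bullet> z)) * g z \<partial>lborel)"
  define tn where "tn = (\<integral>z. indicator {z. r < norm z} z * exp (\<kappa> * (\<theta> \<bullet> z)) * nu z \<partial>lborel)"
  define e where "e = exp (\<kappa> * (\<theta> \<bullet> y))"
  have Im: "0 \<le> Im" "Im \<le> C0 * Cg * \<delta> * f (norm x)"
    unfolding Im_def using integral_middle_le[OF g Cg gb r(1) _ x1 K] r g0 nu_nonneg
    by (auto intro!: integral_nonneg_AE)
  have "Im \<le> C0 * Cg * \<delta> * (M * f s)"
    using Im(2) fx C0_pos Cg K(2) by (smt (verit) mult_left_mono mult_nonneg_nonneg)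
  then have "Im / nu (s *\<^sub>R \<theta>) \<le> (C0 * Cg * \<delta> * (M * f s)) / (c * f s)"
    using lo c_pos fs C0_pos Cg K(2) M by (intro frac_le) auto
  also have "\<dots> = \<delta> * (C0 * Cg * M / c)" using fs by (simp add: field_simps)
  finally have Im_le: "Im / nu (s *\<^sub>R \<theta>) \<le> \<delta> * (C0 * Cg * M / c)" .
  have e: "0 < e" "e \<le> exp (\<kappa> * \<rho>)" unfolding e_def using exp_kappa_inner_le[OF th y] by auto
  have tg: "0 \<le> tg" "tg \<le> C0 * Cg * \<delta> / c"
    unfolding tg_def using integral_exp_tail_le[OF g Cg gb r(1) _ K th] r g0
    by (auto intro!: integral_nonneg_AE)
  have tn: "0 \<le> tn" "tn \<le> C0 * C0 * \<delta> / c"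
    unfolding tn_def using integral_exp_tail_le[OF tail_dominated_nu C0_pos nu_le_f_outside_ball _ _ K th] r nu_nonneg
    by (auto intro!: integral_nonneg_AE)
  have "e * tg \<le> exp (\<kappa> * \<rho>) * (C0 * Cg * \<delta> / c)" using e tg by (intro mult_mono) auto
  then have tg_le: "e * tg \<le> \<delta> * (exp (\<kappa> * \<rho>) * (C0 * Cg / c))" by (simp add: field_simps)
  have "\<bar>e * (a * tn)\<bar> = e * (\<bar>a\<bar> * tn)" using e tn by (simp add: abs_mult)
  also have "\<dots> \<le> exp (\<kappa> * \<rho>) * (Ba * (C0 * C0 * \<delta> / c))" using e tn a by (intro mult_mono) auto
  finally have tn_le: "\<bar>e * (a * tn)\<bar> \<le> \<delta> * (exp (\<kappa> * \<rho>) * Ba * (C0 * C0 / c))" by (simp add: field_simps)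
  have "\<bar>Im / nu (s *\<^sub>R \<theta>) - e * tg - e * (a * tn)\<bar>
      \<le> \<delta> * (C0 * Cg * M / c + exp (\<kappa> * \<rho>) * (C0 * Cg / c) + exp (\<kappa> * \<rho>) * Ba * (C0 * C0 / c))"
    using divide_nonneg_pos[OF Im(1) pos] Im_le tg_le tn_le mult_nonneg_nonneg[OF less_imp_le[OF e(1)] tg(1)]
    by (simp only: abs_le_iff distrib_left) linarith
  then show ?thesis unfolding Im_def tg_def tn_def e_def x_def .
qed

lemma conv_ratio_error_le:
  assumes g: "tail_dominated g" and Cg: "0 < Cg" and gb: "\<And>x. Rg \<le> norm x \<Longrightarrow> g x \<le> Cg * f (norm x)"
    and M: "0 < M" and MS: "\<And>x w :: 'a. S0 \<le> norm x \<Longrightarrow> norm w \<le> \<rho> \<Longrightarrow> f (norm (x - w)) \<le> M * f (norm x)"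
    and r: "Rg \<le> r" "1 \<le> r" and K: "Kfun f TYPE('a) r \<le> ennreal \<delta>" "0 \<le> \<delta>"
    and th: "\<theta> \<in> E" and y: "norm y \<le> \<rho>" and a: "\<bar>a\<bar> \<le> Ba"
    and s: "S0 \<le> s" "2 * r + \<rho> + 2 \<le> s"
    and int: "integrable lborel (\<lambda>z. nu (s *\<^sub>R \<theta> - y - z) * g z)"
  shows "\<bar>conv nu g (s *\<^sub>R \<theta> - y) / nu (s *\<^sub>R \<theta>)
      - exp (\<kappa> * (\<theta> \<bullet> y)) * ((\<integral>z. exp (\<kappa> * (\<theta> \<bullet> z)) * g z \<partial>lborel) + exp_moment \<theta> * a)\<bar>
    \<le> \<bar>ratio_integral nu g r s \<theta> y - (\<integral>z. indicator (cball 0 r) z * exp (\<kappa> * (\<theta> \<bullet> (y + z))) * g z \<partial>lborel)\<bar>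
      + \<bar>ratio_integral g nu r s \<theta> y
          - (\<integral>w. indicator (cball 0 r) w * (exp (\<kappa> * (\<theta> \<bullet> (y + w))) * a) * nu w \<partial>lborel)\<bar>
      + \<delta> * (C0 * Cg * M / c + exp (\<kappa> * \<rho>) * (C0 * Cg / c) + exp (\<kappa> * \<rho>) * Ba * (C0 * C0 / c))"
proof -
  have "s - \<rho> \<le> norm (s *\<^sub>R \<theta> - y)"
    using norm_triangle_ineq2[of "s *\<^sub>R \<theta>" y] norm_in_E[OF th] s r y by simp
  then have x2r: "2 * r < norm (s *\<^sub>R \<theta> - y)" using s by linarith
  obtain Bg where Bg: "\<And>\<theta>. \<theta> \<in> E \<Longrightarrow> integrable lborel (\<lambda>z. exp (\<kappa> * (\<theta> \<bullet> z)) * g z)"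
    using exp_moment_bounded[OF g] by blast
  obtain Bnu where Bnu: "\<And>\<theta>. \<theta> \<in> E \<Longrightarrow> integrable lborel (\<lambda>z. exp (\<kappa> * (\<theta> \<bullet> z)) * nu z)"
    using exp_moment_nu_bounded by blast
  show ?thesis
    using conv_split_cball[OF g x2r int, of "nu (s *\<^sub>R \<theta>)"]
      exp_target_split_cball[OF Bg[OF th] Bnu[OF th], of y a r]
      conv_ratio_remainder_le[OF g Cg gb M MS r K th y a s]
    unfolding ratio_integral_def by (simp add: diff_diff_eq)
qed

lemma eventually_conv_ratio_error_le:
  assumes g: "tail_dominated g" and rho: "0 \<le> \<rho>" and a: "\<And>\<theta>. \<theta> \<in> E \<Longrightarrow> \<bar>a \<theta>\<bar> \<le> Ba"
    and \<epsilon>: "0 < \<epsilon>"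
  obtains r where "0 < r" "\<forall>\<^sub>F s in at_top. \<forall>\<theta>\<in>E. \<forall>y. norm y \<le> \<rho> \<longrightarrow>
      \<bar>conv nu g (s *\<^sub>R \<theta> - y) / nu (s *\<^sub>R \<theta>)
        - exp (\<kappa> * (\<theta> \<bullet> y)) * ((\<integral>z. exp (\<kappa> * (\<theta> \<bullet> z)) * g z \<partial>lborel) + exp_moment \<theta> * a \<theta>)\<bar>
      \<le> \<bar>ratio_integral nu g r s \<theta> y
          - (\<integral>z. indicator (cball 0 r) z * exp (\<kappa> * (\<theta> \<bullet> (y + z))) * g z \<partial>lborel)\<bar>
        + \<bar>ratio_integral g nu r s \<theta> y
          - (\<integral>w. indicator (cball 0 r) w * (exp (\<kappa> * (\<theta> \<bullet> (y + w))) * a \<theta>) * nu w \<partial>lborel)\<bar>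
        + \<epsilon> / 2"
proof -
  note [measurable] = tail_dominatedD(1)[OF g]
  have g0: "\<And>x. 0 \<le> g x" using tail_dominatedD(2)[OF g] .
  obtain Cg Rg where Cg: "0 < Cg" and gb: "\<And>x. Rg \<le> norm x \<Longrightarrow> g x \<le> Cg * f (norm x)"
    using tail_dominatedD(4)[OF g] by auto
  obtain Cc Rc where "0 < Cc" "0 < Rc" and conv_bound:
    "\<And>x. Rc \<le> norm x \<Longrightarrow> (\<integral>\<^sup>+ z. ennreal (nu (x - z) * g z) \<partial>lborel) \<le> ennreal (Cc * f (norm x))"
    using conv_tail_bound[OF g] by blast
  obtain M S0 where M: "0 < M" "\<rho> < S0"
    and MS: "\<And>x w :: 'a. S0 \<le> norm x \<Longrightarrow> norm w \<le> \<rho> \<Longrightarrow> f (norm (x - w)) \<le> M * f (norm x)"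
    using f_norm_diff_le[OF rho] by blast
  have Ba: "0 \<le> Ba" using a[OF \<theta>0_in_E] by linarith
  define Q where "Q = C0 * Cg * M / c + exp (\<kappa> * \<rho>) * (C0 * Cg / c) + exp (\<kappa> * \<rho>) * Ba * (C0 * C0 / c)"
  have Q: "0 \<le> Q" unfolding Q_def using C0_pos Cg M c_pos Ba by simp
  define \<delta> where "\<delta> = \<epsilon> / (2 * (Q + 1))"
  have \<delta>: "0 < \<delta>" unfolding \<delta>_def using \<epsilon> Q by simp
  have "\<delta> * Q = \<epsilon> / 2 * (Q / (Q + 1))" unfolding \<delta>_def by simp
  also have "\<dots> < \<epsilon> / 2 * 1" using Q \<epsilon> by (intro mult_strict_left_mono) auto
  finally have \<delta>Q: "\<delta> * Q < \<epsilon> / 2" by simp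
  obtain r0 where r0: "\<And>r. r0 \<le> r \<Longrightarrow> Kfun f TYPE('a) r \<le> ennreal \<delta>"
    using Kfun_eventually_le[OF \<delta>] by blast
  define r where "r = max (max Rg r0) 1"
  have r: "0 < r" "Rg \<le> r" "1 \<le> r" "Kfun f TYPE('a) r \<le> ennreal \<delta>" unfolding r_def using r0 by auto
  define s1 where "s1 = max (max S0 (Rc + \<rho>)) (2 * r + \<rho> + 2)"
  have bound: "\<bar>conv nu g (s *\<^sub>R \<theta> - y) / nu (s *\<^sub>R \<theta>)
        - exp (\<kappa> * (\<theta> \<bullet> y)) * ((\<integral>z. exp (\<kappa> * (\<theta> \<bullet> z)) * g z \<partial>lborel) + exp_moment \<theta> * a \<theta>)\<bar>
      \<le> \<bar>ratio_integral nu g r s \<theta> y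
          - (\<integral>z. indicator (cball 0 r) z * exp (\<kappa> * (\<theta> \<bullet> (y + z))) * g z \<partial>lborel)\<bar>
        + \<bar>ratio_integral g nu r s \<theta> y
          - (\<integral>w. indicator (cball 0 r) w * (exp (\<kappa> * (\<theta> \<bullet> (y + w))) * a \<theta>) * nu w \<partial>lborel)\<bar>
        + \<epsilon> / 2"
    if s: "s1 \<le> s" and th: "\<theta> \<in> E" and y: "norm y \<le> \<rho>" for s \<theta> y
  proof -
    have "s - \<rho> \<le> norm (s *\<^sub>R \<theta> - y)"
      using norm_triangle_ineq2[of "s *\<^sub>R \<theta>" y] norm_in_E[OF th] s y r unfolding s1_def by simp
    then have "Rc \<le> norm (s *\<^sub>R \<theta> - y)" using s unfolding s1_def by linarith
    then have "(\<integral>\<^sup>+ z. ennreal (nu (s *\<^sub>R \<theta> - y - z) * g z) \<partial>lborel) < \<infinity>"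
      by (rule le_less_trans[OF conv_bound]) simp
    then have int: "integrable lborel (\<lambda>z. nu (s *\<^sub>R \<theta> - y - z) * g z)"
      using nu_nonneg g0 by (intro integrableI_nonneg) simp_all
    have s_ge: "S0 \<le> s" "2 * r + \<rho> + 2 \<le> s" using s unfolding s1_def by auto
    from conv_ratio_error_le[OF g Cg gb M(1) MS r(2,3,4) less_imp_le[OF \<delta>] th y a[OF th] s_ge int] \<delta>Q
    show ?thesis unfolding Q_def by linarith
  qed
  show thesis
    by (rule that[OF r(1) eventually_mono[OF eventually_ge_at_top[of s1]]]) (use bound in blast)
qed

lemma uniform_limit_conv_ratio:
  assumes g: "tail_dominated g"
    and S: "\<And>\<theta> y. (\<theta>, y) \<in> S \<Longrightarrow> \<theta> \<in> E \<and> norm y \<le> \<rho>" and rho: "0 \<le> \<rho>"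
    and a: "\<And>\<theta>. \<theta> \<in> E \<Longrightarrow> \<bar>a \<theta>\<bar> \<le> Ba"
    and near0: "\<And>r. 0 < r \<Longrightarrow> uniform_limit S (\<lambda>s (\<theta>, y). ratio_integral nu g r s \<theta> y)
      (\<lambda>(\<theta>, y). \<integral>z. indicator (cball 0 r) z * exp (\<kappa> * (\<theta> \<bullet> (y + z))) * g z \<partial>lborel) at_top"
    and nearx: "\<And>r. 0 < r \<Longrightarrow> uniform_limit S (\<lambda>s (\<theta>, y). ratio_integral g nu r s \<theta> y)
      (\<lambda>(\<theta>, y). \<integral>w. indicator (cball 0 r) w * (exp (\<kappa> * (\<theta> \<bullet> (y + w))) * a \<theta>) * nu w \<partial>lborel) at_top"
  shows "uniform_limit S (\<lambda>s (\<theta>, y). conv nu g (s *\<^sub>R \<theta> - y) / nu (s *\<^sub>R \<theta>))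
    (\<lambda>(\<theta>, y). exp (\<kappa> * (\<theta> \<bullet> y)) * ((\<integral>z. exp (\<kappa> * (\<theta> \<bullet> z)) * g z \<partial>lborel) + exp_moment \<theta> * a \<theta>))
    at_top"
proof (rule uniform_limitI)
  fix \<epsilon> :: real assume \<epsilon>: "0 < \<epsilon>"
  obtain r where r: "0 < r" and err: "\<forall>\<^sub>F s in at_top. \<forall>\<theta>\<in>E. \<forall>y. norm y \<le> \<rho> \<longrightarrow>
      \<bar>conv nu g (s *\<^sub>R \<theta> - y) / nu (s *\<^sub>R \<theta>)
        - exp (\<kappa> * (\<theta> \<bullet> y)) * ((\<integral>z. exp (\<kappa> * (\<theta> \<bullet> z)) * g z \<partial>lborel) + exp_moment \<theta> * a \<theta>)\<bar>
      \<le> \<bar>ratio_integral nu g r s \<theta> y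
          - (\<integral>z. indicator (cball 0 r) z * exp (\<kappa> * (\<theta> \<bullet> (y + z))) * g z \<partial>lborel)\<bar>
        + \<bar>ratio_integral g nu r s \<theta> y
          - (\<integral>w. indicator (cball 0 r) w * (exp (\<kappa> * (\<theta> \<bullet> (y + w))) * a \<theta>) * nu w \<partial>lborel)\<bar>
        + \<epsilon> / 2"
    using eventually_conv_ratio_error_le[where a=a and Ba=Ba, OF g rho a \<epsilon>] by blast
  have "\<epsilon> / 4 > 0" using \<epsilon> by simp
  from uniform_limitD[OF near0[OF r] this] uniform_limitD[OF nearx[OF r] this] err
  show "\<forall>\<^sub>F s in at_top. \<forall>p\<in>S. dist ((\<lambda>s (\<theta>, y). conv nu g (s *\<^sub>R \<theta> - y) / nu (s *\<^sub>R \<theta>)) s p)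
      ((\<lambda>(\<theta>, y). exp (\<kappa> * (\<theta> \<bullet> y)) * ((\<integral>z. exp (\<kappa> * (\<theta> \<bullet> z)) * g z \<partial>lborel)
         + exp_moment \<theta> * a \<theta>)) p) < \<epsilon>"
  proof eventually_elim
    case (elim s)
    show ?case
    proof (intro ballI, clarify)
      fix \<theta> y assume p: "(\<theta>, y) \<in> S"
      with S have "\<theta> \<in> E" "norm y \<le> \<rho>" by auto
      with elim p show "dist (conv nu g (s *\<^sub>R \<theta> - y) / nu (s *\<^sub>R \<theta>))
          (exp (\<kappa> * (\<theta> \<bullet> y)) * ((\<integral>z. exp (\<kappa> * (\<theta> \<bullet> z)) * g z \<partial>lborel) + exp_moment \<theta> * a \<theta>)) < \<epsilon>"
        by (force simp: dist_real_def)
    qed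
  qed
qed

lemma tendsto_ratio_integral:
  assumes h: "tail_dominated h" and u: "integrable lborel u" and th: "\<theta> \<in> E" and r: "0 < r"
    and [measurable]: "L \<in> borel_measurable borel"
    and lim: "\<And>w. ((\<lambda>s. h (s *\<^sub>R \<theta> - w) / nu (s *\<^sub>R \<theta>)) \<longlongrightarrow> L w) at_top"
  shows "((\<lambda>s. ratio_integral h u r s \<theta> y) \<longlongrightarrow> (\<integral>z. indicator (cball 0 r) z * L (y + z) * u z \<partial>lborel)) at_top"
proof -
  note [measurable] = tail_dominatedD(1)[OF h]
  have "0 \<le> norm y + r" using r by simp
  then obtain B where B: "\<forall>\<^sub>F s in at_top. \<forall>\<theta>\<in>E. \<forall>w. norm w \<le> norm y + r \<longrightarrow>
      \<bar>h (s *\<^sub>R \<theta> - w) / nu (s *\<^sub>R \<theta>)\<bar> \<le> B"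
    using eventually_ratio_bounded[OF h] by blast
  show ?thesis unfolding ratio_integral_def
  proof (rule tendsto_integral_indicator_dominated[where B=B])
    show "cball 0 r \<in> sets borel" by simp
    show "integrable lborel u" by (rule u)
    show "(\<lambda>z. h (s *\<^sub>R \<theta> - y - z) / nu (s *\<^sub>R \<theta>)) \<in> borel_measurable borel" for s by measurable
    show "(\<lambda>z. L (y + z)) \<in> borel_measurable borel" by measurable
    show "((\<lambda>s. h (s *\<^sub>R \<theta> - y - z) / nu (s *\<^sub>R \<theta>)) \<longlongrightarrow> L (y + z)) at_top" for z
      using lim[of "y + z"] by (simp add: diff_diff_eq)
    show "\<forall>\<^sub>F s in at_top. \<forall>z\<in>cball 0 r. \<bar>h (s *\<^sub>R \<theta> - y - z) / nu (s *\<^sub>R \<theta>)\<bar> \<le> B"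
      using B
    proof (rule eventually_mono, intro ballI)
      fix s and z :: 'a
      assume H: "\<forall>\<theta>\<in>E. \<forall>w. norm w \<le> norm y + r \<longrightarrow> \<bar>h (s *\<^sub>R \<theta> - w) / nu (s *\<^sub>R \<theta>)\<bar> \<le> B"
        and z: "z \<in> cball 0 r"
      have "norm (y + z) \<le> norm y + r" using z norm_triangle_ineq[of y z] by simp
      then show "\<bar>h (s *\<^sub>R \<theta> - y - z) / nu (s *\<^sub>R \<theta>)\<bar> \<le> B" using H th by (simp add: diff_diff_eq)
    qed
  qed
qed

lemma uniform_limit_ratio_integral:
  assumes u: "integrable lborel u" and r: "0 < r" and T: "cball 0 (\<rho> + r) \<subseteq> T"
    and [measurable]: "h \<in> borel_measurable borel" "\<And>\<theta>. L \<theta> \<in> borel_measurable borel"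
    and bound: "\<And>\<theta> w. \<theta> \<in> E \<Longrightarrow> norm w \<le> \<rho> + r \<Longrightarrow> \<bar>L \<theta> w\<bar> \<le> B"
    and unif: "uniform_limit (E \<times> T) (\<lambda>s (\<theta>, w). h (s *\<^sub>R \<theta> - w) / nu (s *\<^sub>R \<theta>)) (\<lambda>(\<theta>, w). L \<theta> w) at_top"
  shows "uniform_limit (E \<times> ball 0 \<rho>) (\<lambda>s (\<theta>, y). ratio_integral h u r s \<theta> y)
    (\<lambda>(\<theta>, y). \<integral>z. indicator (cball 0 r) z * L \<theta> (y + z) * u z \<partial>lborel) at_top"
proof -
  have "uniform_limit (E \<times> ball 0 \<rho>)
      (\<lambda>s (p :: 'a \<times> 'a). \<integral>z. indicator (cball 0 r) z * (h (s *\<^sub>R fst p - snd p - z) / nu (s *\<^sub>R fst p)) * u z \<partial>lborel)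
      (\<lambda>(p :: 'a \<times> 'a). \<integral>z. indicator (cball 0 r) z * L (fst p) (snd p + z) * u z \<partial>lborel) at_top"
  proof (rule uniform_limit_integral_indicator[where B=B])
    show "cball 0 r \<in> sets borel" by simp
    show "integrable lborel u" by (rule u)
    show "(\<lambda>z. h (s *\<^sub>R fst p - snd p - z) / nu (s *\<^sub>R fst p)) \<in> borel_measurable borel" for s p
      by measurable
    show "(\<lambda>z. L (fst p) (snd p + z)) \<in> borel_measurable borel" for p by measurable
    show "\<bar>L (fst p) (snd p + z)\<bar> \<le> B" if "p \<in> E \<times> ball 0 \<rho>" "z \<in> cball 0 r" for p :: "'a \<times> 'a" and z :: 'a
      using that norm_triangle_ineq[of "snd p" z] by (intro bound) auto
    fix e :: real assume e: "0 < e"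
    show "\<forall>\<^sub>F s in at_top. \<forall>p\<in>E \<times> ball 0 \<rho>. \<forall>z\<in>cball 0 r.
        \<bar>h (s *\<^sub>R fst p - snd p - z) / nu (s *\<^sub>R fst p) - L (fst p) (snd p + z)\<bar> \<le> e"
      using uniform_limitD[OF unif e]
    proof (rule eventually_mono, intro ballI)
      fix s and p :: "'a \<times> 'a" and z :: 'a
      assume H: "\<forall>q\<in>E \<times> T. dist ((\<lambda>s (\<theta>, w). h (s *\<^sub>R \<theta> - w) / nu (s *\<^sub>R \<theta>)) s q)
          ((\<lambda>(\<theta>, w). L \<theta> w) q) < e"
        and p: "p \<in> E \<times> ball 0 \<rho>" and z: "z \<in> cball 0 r"
      have "(fst p, snd p + z) \<in> E \<times> T" using p z T norm_triangle_ineq[of "snd p" z] by auto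
      from H[rule_format, OF this]
      show "\<bar>h (s *\<^sub>R fst p - snd p - z) / nu (s *\<^sub>R fst p) - L (fst p) (snd p + z)\<bar> \<le> e"
        by (simp add: dist_real_def diff_diff_eq)
    qed
  qed
  then show ?thesis unfolding ratio_integral_def case_prod_unfold .
qed

lemma nconv_coefficient_bounded:
  obtains B where "\<And>\<theta>. \<theta> \<in> E \<Longrightarrow> \<bar>real n * exp_moment \<theta> ^ (n - 1)\<bar> \<le> B"
proof -
  obtain B where B: "\<And>\<theta>. \<theta> \<in> E \<Longrightarrow> 0 \<le> exp_moment \<theta> \<and> exp_moment \<theta> \<le> B"
    using exp_moment_nu_bounded by blast
  have "\<bar>real n * exp_moment \<theta> ^ (n - 1)\<bar> \<le> real n * B ^ (n - 1)" if "\<theta> \<in> E" for \<theta>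
    using B[OF that] by (auto intro!: mult_left_mono power_mono)
  then show thesis by (rule that)
qed

lemma exp_target_Suc:
  assumes "1 \<le> n"
  shows "exp (\<kappa> * (\<theta> \<bullet> y)) * ((\<integral>z. exp (\<kappa> * (\<theta> \<bullet> z)) * nconv nu n z \<partial>lborel)
      + exp_moment \<theta> * (real n * exp_moment \<theta> ^ (n - 1)))
    = exp (\<kappa> * (\<theta> \<bullet> y)) * real (Suc n) * exp_moment \<theta> ^ (Suc n - 1)"
proof -
  have "exp_moment \<theta> * exp_moment \<theta> ^ (n - 1) = exp_moment \<theta> ^ n" using assms by (cases n) auto
  then show ?thesis unfolding integral_exp_nconv[OF assms] by (simp add: algebra_simps)
qed

lemma tendsto_nconv_ratio:
  assumes "1 \<le> n" and th: "\<theta> \<in> E"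
  shows "((\<lambda>s. nconv nu n (s *\<^sub>R \<theta> - y) / nu (s *\<^sub>R \<theta>))
    \<longlongrightarrow> exp (\<kappa> * (\<theta> \<bullet> y)) * real n * exp_moment \<theta> ^ (n - 1)) at_top"
  using assms(1)
proof (induction n arbitrary: y rule: dec_induct)
  case base
  then show ?case using ratio_tendsto[OF th] by (simp add: nconv_def)
next
  case (step n)
  let ?g = "nconv nu n" and ?a = "\<lambda>\<theta>. real n * exp_moment \<theta> ^ (n - 1)"
  have g: "tail_dominated ?g" by (rule tail_dominated_nconv[OF step(1)])
  have gi: "integrable lborel ?g" using tail_dominatedD(3)[OF g] .
  obtain Ba where Ba: "\<And>\<theta>. \<theta> \<in> E \<Longrightarrow> \<bar>?a \<theta>\<bar> \<le> Ba" using nconv_coefficient_bounded by blast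
  have "uniform_limit {(\<theta>, y)} (\<lambda>s (\<theta>, y). conv nu ?g (s *\<^sub>R \<theta> - y) / nu (s *\<^sub>R \<theta>))
    (\<lambda>(\<theta>, y). exp (\<kappa> * (\<theta> \<bullet> y)) * ((\<integral>z. exp (\<kappa> * (\<theta> \<bullet> z)) * ?g z \<partial>lborel) + exp_moment \<theta> * ?a \<theta>))
    at_top"
  proof (rule uniform_limit_conv_ratio[OF g _ _ Ba])
    show "\<And>\<theta>' y'. (\<theta>', y') \<in> {(\<theta>, y)} \<Longrightarrow> \<theta>' \<in> E \<and> norm y' \<le> norm y" using th by auto
    fix r :: real assume r: "0 < r"
    show "uniform_limit {(\<theta>, y)} (\<lambda>s (\<theta>, y). ratio_integral nu ?g r s \<theta> y)
      (\<lambda>(\<theta>, y). \<integral>z. indicator (cball 0 r) z * exp (\<kappa> * (\<theta> \<bullet> (y + z))) * ?g z \<partial>lborel) at_top"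
      unfolding uniform_limit_singleton_iff
      by (simp add: tendsto_ratio_integral[OF tail_dominated_nu gi th r _ ratio_tendsto[OF th]])
    show "uniform_limit {(\<theta>, y)} (\<lambda>s (\<theta>, y). ratio_integral ?g nu r s \<theta> y)
      (\<lambda>(\<theta>, y). \<integral>w. indicator (cball 0 r) w * (exp (\<kappa> * (\<theta> \<bullet> (y + w))) * ?a \<theta>) * nu w \<partial>lborel) at_top"
      unfolding uniform_limit_singleton_iff
      using tendsto_ratio_integral[OF g nu_integrable th r _ step.IH] by (simp add: mult.assoc)
  qed simp
  then show ?case
    unfolding nconv_Suc[OF step(1)]
    by (simp only: uniform_limit_singleton_iff prod.case exp_target_Suc[OF step(1)])
qed

lemma uniform_limit_nconv_ratio:
  assumes U: "\<And>D. compact D \<Longrightarrow> uniform_limit (E \<times> D)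
      (\<lambda>s (\<theta>, y). nu (s *\<^sub>R \<theta> - y) / nu (s *\<^sub>R \<theta>)) (\<lambda>(\<theta>, y). exp (\<kappa> * (\<theta> \<bullet> y))) at_top"
    and "1 \<le> n" and "0 < \<rho>"
  shows "uniform_limit (E \<times> ball 0 \<rho>) (\<lambda>s (\<theta>, y). nconv nu n (s *\<^sub>R \<theta> - y) / nu (s *\<^sub>R \<theta>))
    (\<lambda>(\<theta>, y). exp (\<kappa> * (\<theta> \<bullet> y)) * real n * exp_moment \<theta> ^ (n - 1)) at_top"
  using assms(2,3)
proof (induction n arbitrary: \<rho> rule: dec_induct)
  case base
  have "E \<times> ball 0 \<rho> \<subseteq> E \<times> cball 0 \<rho>" by auto
  from uniform_limit_on_subset[OF U[of "cball 0 \<rho>"] this] show ?case by (simp add: nconv_def)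
next
  case (step n)
  let ?g = "nconv nu n" and ?a = "\<lambda>\<theta>. real n * exp_moment \<theta> ^ (n - 1)"
  have g: "tail_dominated ?g" by (rule tail_dominated_nconv[OF step(1)])
  note [measurable] = tail_dominatedD(1)[OF g]
  have gi: "integrable lborel ?g" using tail_dominatedD(3)[OF g] .
  obtain Ba where Ba: "\<And>\<theta>. \<theta> \<in> E \<Longrightarrow> \<bar>?a \<theta>\<bar> \<le> Ba" using nconv_coefficient_bounded by blast
  have "uniform_limit (E \<times> ball 0 \<rho>) (\<lambda>s (\<theta>, y). conv nu ?g (s *\<^sub>R \<theta> - y) / nu (s *\<^sub>R \<theta>))
    (\<lambda>(\<theta>, y). exp (\<kappa> * (\<theta> \<bullet> y)) * ((\<integral>z. exp (\<kappa> * (\<theta> \<bullet> z)) * ?g z \<partial>lborel) + exp_moment \<theta> * ?a \<theta>))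
    at_top"
  proof (rule uniform_limit_conv_ratio[OF g _ _ Ba])
    show "\<And>\<theta> y. (\<theta>, y) \<in> E \<times> ball 0 \<rho> \<Longrightarrow> \<theta> \<in> E \<and> norm y \<le> \<rho>" by auto
    show "0 \<le> \<rho>" using step by simp
    fix r :: real assume r: "0 < r"
    show "uniform_limit (E \<times> ball 0 \<rho>) (\<lambda>s (\<theta>, y). ratio_integral nu ?g r s \<theta> y)
      (\<lambda>(\<theta>, y). \<integral>z. indicator (cball 0 r) z * exp (\<kappa> * (\<theta> \<bullet> (y + z))) * ?g z \<partial>lborel) at_top"
      by (intro uniform_limit_ratio_integral[where L="\<lambda>\<theta> w. exp (\<kappa> * (\<theta> \<bullet> w))"
          and B="exp (\<kappa> * (\<rho> + r))", OF gi r order_refl _ _ _ U[OF compact_cball]])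
        (auto intro: kappa_inner_le)
    have "uniform_limit (E \<times> ball 0 (\<rho> + r + 1)) (\<lambda>s (\<theta>, w). ?g (s *\<^sub>R \<theta> - w) / nu (s *\<^sub>R \<theta>))
        (\<lambda>(\<theta>, w). exp (\<kappa> * (\<theta> \<bullet> w)) * ?a \<theta>) at_top"
      using step.IH[of "\<rho> + r + 1"] step.prems r by (simp add: mult.assoc)
    moreover have "\<bar>exp (\<kappa> * (\<theta> \<bullet> w)) * ?a \<theta>\<bar> \<le> exp (\<kappa> * (\<rho> + r)) * Ba"
      if "\<theta> \<in> E" "norm w \<le> \<rho> + r" for \<theta> w
      using exp_kappa_inner_le[OF that] Ba[OF that(1)] by (simp add: abs_mult mult_mono)
    ultimately show "uniform_limit (E \<times> ball 0 \<rho>) (\<lambda>s (\<theta>, y). ratio_integral ?g nu r s \<theta> y)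
      (\<lambda>(\<theta>, y). \<integral>w. indicator (cball 0 r) w * (exp (\<kappa> * (\<theta> \<bullet> (y + w))) * ?a \<theta>) * nu w \<partial>lborel) at_top"
      by (intro uniform_limit_ratio_integral[where L="\<lambda>\<theta> w. exp (\<kappa> * (\<theta> \<bullet> w)) * ?a \<theta>",
          OF nu_integrable r cball_subset_ball_iff[THEN iffD2]]) auto
  qed
  then show ?case
    unfolding nconv_Suc[OF step(1)]
    by (rule uniform_limit_cong'[THEN iffD1, rotated -1])
      (simp_all only: split_paired_all prod.case exp_target_Suc[OF step(1)])
qed

end

lemma exp_tail_density_of_conditions:
  fixes nu :: "'a::euclidean_space \<Rightarrow> real"
  assumes "\<forall>x. 0 \<le> nu x" "nu \<in> borel_measurable lborel" "integrable lborel nu"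
    "E \<subseteq> sphere 0 1" "0 \<le> \<kappa>" "condB nu f" "condC nu f E \<kappa>" "\<theta>0 \<in> E"
  obtains c C0 where "exp_tail_density nu f E \<kappa> c C0 \<theta>0"
proof -
  obtain C0 where "0 < C0" "\<And>x. x \<noteq> 0 \<Longrightarrow> nu x \<le> C0 * f (norm x)"
    using assms(6) unfolding condB_def by auto
  moreover obtain c where "0 < c" "\<And>x. x \<in> GammaE E \<Longrightarrow> c * f (norm x) \<le> nu x"
    using assms(7) unfolding condC_def by auto
  ultimately have "exp_tail_density nu f E \<kappa> c C0 \<theta>0"
    using assms unfolding condB_def condC_def by unfold_locales auto
  then show thesis by (rule that)
qed

theorem lemma6:
  fixes nu :: "'a::euclidean_space \<Rightarrow> real" and f :: "real \<Rightarrow> real"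
    and E :: "'a set" and \<kappa> :: real
  assumes nu_nonneg: "\<forall>x. 0 \<le> nu x"
    and nu_meas: "nu \<in> borel_measurable lborel"
    and nu_finite: "integrable lborel nu"
    and E_sphere: "E \<subseteq> sphere 0 1"
    and kappa: "0 \<le> \<kappa>"
    and B: "condB nu f"
    and C: "condC nu f E \<kappa>"
  shows
    "(\<forall>n\<ge>1. \<forall>\<theta>\<in>E. \<forall>y.
        ((\<lambda>s. nconv nu n (s *\<^sub>R \<theta> - y) / nu (s *\<^sub>R \<theta>)) \<longlongrightarrow>
           exp (\<kappa> * (\<theta> \<bullet> y)) * real n *
             (\<integral>z. exp (\<kappa> * (\<theta> \<bullet> z)) * nu z \<partial>lborel) ^ (n - 1)) at_top)
     \<and>
     ((\<forall>D. compact D \<longrightarrow>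
         uniform_limit (E \<times> D) (\<lambda>s (\<theta>, y). nu (s *\<^sub>R \<theta> - y) / nu (s *\<^sub>R \<theta>))
           (\<lambda>(\<theta>, y). exp (\<kappa> * (\<theta> \<bullet> y))) at_top)
      \<longrightarrow> (\<forall>n\<ge>1. \<forall>\<rho>>0.
         uniform_limit (E \<times> ball 0 \<rho>)
           (\<lambda>s (\<theta>, y). nconv nu n (s *\<^sub>R \<theta> - y) / nu (s *\<^sub>R \<theta>))
           (\<lambda>(\<theta>, y). exp (\<kappa> * (\<theta> \<bullet> y)) * real n *
              (\<integral>z. exp (\<kappa> * (\<theta> \<bullet> z)) * nu z \<partial>lborel) ^ (n - 1)) at_top))"
proof (cases "E = {}")
  case True
  then show ?thesis by (simp add: uniform_limit_iff)
next
  case False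
  then obtain \<theta>0 where "\<theta>0 \<in> E" by blast
  with assms obtain c C0 where "exp_tail_density nu f E \<kappa> c C0 \<theta>0"
    by (elim exp_tail_density_of_conditions)
  then interpret exp_tail_density nu f E \<kappa> c C0 \<theta>0 .
  show ?thesis
    using tendsto_nconv_ratio uniform_limit_nconv_ratio unfolding exp_moment_def by blast
qed

end
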